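(* Let $S$ be a semibounded relation in $\mathfrak H$ with lower bound $\gamma\in\mathbb R$, $c\le\gamma$, $Q_c$ a representing map for $\mathfrak t(S)-c$ with companion relation $J_c$, and let $H$ be a semibounded selfadjoint extension of $S$ which is bounded below by $c$. Then: (a) for $\{h,h'\}\in S$ and $\{f,f'\}\in H$ with $f\in\mathrm{dom}\,J_c^*$, $$(\mathfrak t(H)-c)[f-h,f-h]-\|(J_c^* )_{\rm reg}f-Q_ch\|^2=(\mathfrak t(H)-c)[f,f]-\|(J_c^* )_{\rm reg}f\|^2;$$ (b) for all $\{f,f'\}\in H$ and $\{h,h'\}\in S$ one has $f\in\mathrm{dom}\,J_c^*$ and $(\mathfrak t(H)-c)[f-h,f-h]\ge\|(J_c^* )_{\rm reg}f-Q_ch\|^2$; (c) if $\mathfrak t_H\subset\mathfrak t_{S_{{\rm K},c}}$, then equality holds in (b) for all $\{f,f'\}\in H$, $\{h,h'\}\in S$.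
   Context: Linear relations are linear subspaces of $\mathfrak H\times\mathfrak K$; $T^*$ adjoint, $T^{**}$ closure; products $RT$; $c+T=\{\{f,g+cf\}:\{f,g\}\in T\}$; for closed $T$, $T_{\rm reg}=\{\{f,(I-\pi)g\}:\{f,g\}\in T\}$ with $\pi$ the projection onto $\mathrm{mul}\,T$. $S$ semibounded with lower bound $\gamma$: $\gamma$ is the supremum of $c$ with $(\varphi',\varphi)\ge c\|\varphi\|^2$ on $S$. For a semibounded relation $T$, $\mathfrak t(T)[\varphi,\psi]=(\varphi',\psi)$ for $\{\varphi,\varphi'\},\{\psi,\psi'\}\in T$. A representing map for $\mathfrak t(S)-c$ is a linear operator $Q_c$ into a Hilbert space with $\mathrm{dom}\,Q_c=\mathrm{dom}\,S$ and $\mathfrak t(S)[\varphi,\psi]=c(\varphi,\psi)+(Q_c\varphi,Q_c\psi)$; companion relation $J_c=\{\{Q_c\varphi,\varphi'-c\varphi\}:\{\varphi,\varphi'\}\in S\}$; Kreĭn type extension $S_{{\rm K},c}=c+J_c^{**}J_c^*$. For semibounded selfadjoint $H$, $\mathfrak t_H$ is its associated closed form (closure of $\mathfrak t(H)$); $\mathfrak t_1\subset\mathfrak t_2$ means extension. "Bounded below by $c$" means $(f',f)\ge c\|f\|^2$ for $\{f,f'\}\in H$. *)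

theory Defs
  imports "HOL-Analysis.Analysis" "HOL-Library.Complex_Order"
begin

text \<open>The inner product is linear in the first and conjugate linear in
the second argument (the convention of the paper).\<close>

class complex_vector = real_vector +
  fixes scaleC :: "complex \<Rightarrow> 'a \<Rightarrow> 'a" (infixr \<open>*\<^sub>C\<close> 75)
  assumes scaleR_scaleC: "scaleR r x = scaleC (complex_of_real r) x"
    and scaleC_add_right: "a *\<^sub>C (x + y) = a *\<^sub>C x + a *\<^sub>C y"
    and scaleC_add_left: "(a + b) *\<^sub>C x = a *\<^sub>C x + b *\<^sub>C x"
    and scaleC_scaleC: "a *\<^sub>C (b *\<^sub>C x) = (a * b) *\<^sub>C x"
    and scaleC_one: "1 *\<^sub>C x = x"

class complex_inner = complex_vector + real_normed_vector +
  fixes cinner :: "'a \<Rightarrow> 'a \<Rightarrow> complex"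
  assumes cinner_commute: "cinner x y = cnj (cinner y x)"
    and cinner_add_left: "cinner (x + y) z = cinner x z + cinner y z"
    and cinner_scaleC_left: "cinner (a *\<^sub>C x) y = a * cinner x y"
    and cinner_real_nonneg: "Im (cinner x x) = 0 \<and> 0 \<le> Re (cinner x x)"
    and cinner_eq_zero_iff: "cinner x x = 0 \<longleftrightarrow> x = 0"
    and norm_eq_sqrt_cinner: "norm x = sqrt (Re (cinner x x))"

class chilbert_space = complex_inner + complete_space

text \<open>A linear relation from \<open>'a\<close> to \<open>'b\<close> is a linear subspace of \<open>'a \<times> 'b\<close>,
represented as a set of pairs \<open>{f, g}\<close> = \<open>(f, g)\<close>.\<close>

definition lin_rel :: "('a::complex_vector \<times> 'b::complex_vector) set \<Rightarrow> bool" where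
  "lin_rel T \<longleftrightarrow> (0, 0) \<in> T
     \<and> (\<forall>p\<in>T. \<forall>q\<in>T. (fst p + fst q, snd p + snd q) \<in> T)
     \<and> (\<forall>a. \<forall>p\<in>T. (a *\<^sub>C fst p, a *\<^sub>C snd p) \<in> T)"

definition rdom :: "('a \<times> 'b) set \<Rightarrow> 'a set" where
  "rdom T = fst ` T"

definition rmul :: "('a::zero \<times> 'b) set \<Rightarrow> 'b set" where
  "rmul T = {g. (0, g) \<in> T}"

definition radj :: "('a::complex_inner \<times> 'b::complex_inner) set \<Rightarrow> ('b \<times> 'a) set" where
  "radj T = {(h, k). \<forall>(f, g)\<in>T. cinner g h = cinner f k}"

definition rprod :: "('b \<times> 'c) set \<Rightarrow> ('a \<times> 'b) set \<Rightarrow> ('a \<times> 'c) set" where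
  "rprod R T = {(f, k). \<exists>g. (f, g) \<in> T \<and> (g, k) \<in> R}"

definition rshift :: "real \<Rightarrow> ('a \<times> 'a::real_vector) set \<Rightarrow> ('a \<times> 'a) set" where
  "rshift c T = {(f, g + c *\<^sub>R f) | f g. (f, g) \<in> T}"

definition orth_proj :: "'a::complex_inner set \<Rightarrow> 'a \<Rightarrow> 'a" where
  "orth_proj M x = (THE p. p \<in> M \<and> (\<forall>m\<in>M. cinner (x - p) m = 0))"

definition rreg :: "('a::zero \<times> 'b::complex_inner) set \<Rightarrow> ('a \<times> 'b) set" where
  "rreg T = {(f, g - orth_proj (rmul T) g) | f g. (f, g) \<in> T}"

definition rapp :: "('a \<times> 'b) set \<Rightarrow> 'a \<Rightarrow> 'b" where
  "rapp T f = (SOME g. (f, g) \<in> T)"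

definition selfadjoint :: "('a::complex_inner \<times> 'a) set \<Rightarrow> bool" where
  "selfadjoint H \<longleftrightarrow> H = radj H"

text \<open>\<open>T\<close> is bounded below by \<open>c\<close>: \<open>(f',f) \<ge> c \<parallel>f\<parallel>\<^sup>2\<close> for all \<open>{f,f'} \<in> T\<close>
(in particular \<open>(f',f)\<close> is real).\<close>
definition bounded_below :: "('a::complex_inner \<times> 'a) set \<Rightarrow> real \<Rightarrow> bool" where
  "bounded_below T c \<longleftrightarrow>
     (\<forall>(f, f')\<in>T. complex_of_real (c * (norm f)\<^sup>2) \<le> cinner f' f)"

definition semibounded :: "('a::complex_inner \<times> 'a) set \<Rightarrow> bool" where
  "semibounded T \<longleftrightarrow> lin_rel T \<and> (\<exists>c. bounded_below T c)"

definition is_lower_bound :: "('a::complex_inner \<times> 'a) set \<Rightarrow> real \<Rightarrow> bool" where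
  "is_lower_bound T \<gamma> \<longleftrightarrow>
     bdd_above {c. bounded_below T c} \<and> \<gamma> = Sup {c. bounded_below T c}"

definition tform :: "('a::complex_inner \<times> 'a) set \<Rightarrow> 'a \<Rightarrow> 'a \<Rightarrow> complex" where
  "tform T \<phi> \<psi> = cinner (SOME \<phi>'. (\<phi>, \<phi>') \<in> T) \<psi>"

text \<open>A sesquilinear form is represented by its domain and its values.\<close>
type_synonym 'a sform = "'a set \<times> ('a \<Rightarrow> 'a \<Rightarrow> complex)"

definition rel_form :: "('a::complex_inner \<times> 'a) set \<Rightarrow> 'a sform" where
  "rel_form T = (rdom T, tform T)"

definition form_conv :: "'a::complex_inner sform \<Rightarrow> 'a \<Rightarrow> (nat \<Rightarrow> 'a) \<Rightarrow> bool" where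
  "form_conv t f s \<longleftrightarrow> (\<forall>n. s n \<in> fst t) \<and> s \<longlonglongrightarrow> f \<and>
     (\<forall>e>0. \<exists>N. \<forall>n\<ge>N. \<forall>m\<ge>N. norm (snd t (s n - s m) (s n - s m)) < e)"

definition form_closure :: "'a::complex_inner sform \<Rightarrow> 'a sform" where
  "form_closure t =
     ({f. \<exists>s. form_conv t f s},
      \<lambda>f g. THE v. \<forall>s s'. form_conv t f s \<longrightarrow> form_conv t g s' \<longrightarrow>
                          (\<lambda>n. snd t (s n) (s' n)) \<longlonglongrightarrow> v)"

definition closed_form :: "('a::complex_inner \<times> 'a) set \<Rightarrow> 'a sform" where
  "closed_form H = form_closure (rel_form H)"

definition form_ext :: "'a sform \<Rightarrow> 'a sform \<Rightarrow> bool" where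
  "form_ext t1 t2 \<longleftrightarrow> fst t1 \<subseteq> fst t2 \<and>
     (\<forall>f\<in>fst t1. \<forall>g\<in>fst t1. snd t1 f g = snd t2 f g)"

definition representing_map ::
  "('a::complex_inner \<times> 'a) set \<Rightarrow> real \<Rightarrow> ('a \<Rightarrow> 'k::complex_inner) \<Rightarrow> bool" where
  "representing_map S c Q \<longleftrightarrow>
     (\<forall>\<phi>\<in>rdom S. \<forall>\<psi>\<in>rdom S. \<forall>a b.
        Q (a *\<^sub>C \<phi> + b *\<^sub>C \<psi>) = a *\<^sub>C Q \<phi> + b *\<^sub>C Q \<psi>) \<and>
     (\<forall>\<phi>\<in>rdom S. \<forall>\<psi>\<in>rdom S.
        tform S \<phi> \<psi> = complex_of_real c * cinner \<phi> \<psi> + cinner (Q \<phi>) (Q \<psi>))"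

definition companion ::
  "('a::complex_inner \<times> 'a) set \<Rightarrow> real \<Rightarrow> ('a \<Rightarrow> 'k::complex_inner) \<Rightarrow> ('k \<times> 'a) set" where
  "companion S c Q = {(Q \<phi>, \<phi>' - c *\<^sub>R \<phi>) | \<phi> \<phi>'. (\<phi>, \<phi>') \<in> S}"

definition krein_ext ::
  "('a::complex_inner \<times> 'a) set \<Rightarrow> real \<Rightarrow> ('a \<Rightarrow> 'k::complex_inner) \<Rightarrow> ('a \<times> 'a) set" where
  "krein_ext S c Q =
     rshift c (rprod (radj (radj (companion S c Q))) (radj (companion S c Q)))"

end

theory Submission
  imports Defs
begin

text \<open>
For \<open>{f, f'} \<in> H\<close> the functional \<open>{\<phi>, \<phi>'} \<mapsto> (\<phi>' - c \<phi>, f)\<close> on \<open>S\<close> is bounded by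
\<open>\<surd>((t(H) - c)[f]) \<parallel>Q\<^sub>c \<phi>\<parallel>\<close>, by the Cauchy-Schwarz inequality for the nonnegative form \<open>t(H) - c\<close>.
A Riesz type argument represents it as \<open>(Q\<^sub>c \<phi>, k)\<close>, i.e. \<open>{f, k} \<in> J\<^sub>c\<^sup>*\<close>, so \<open>dom H \<subseteq> dom J\<^sub>c\<^sup>*\<close>.
Writing \<open>R = (J\<^sub>c\<^sup>*)\<^sub>r\<^sub>e\<^sub>g\<close>, the relation \<open>(h' - c h, f) = (Q\<^sub>c h, R f)\<close> for \<open>{h, h'} \<in> S\<close> turns the
expansion of \<open>(t(H) - c)[f - h]\<close> into the identity (a). As \<open>R f\<close> is orthogonal to
\<open>mul J\<^sub>c\<^sup>* = (ran Q\<^sub>c)\<^sup>\<bottom>\<close>, it lies in the closure of \<open>ran Q\<^sub>c\<close>; choosing \<open>Q\<^sub>c h\<close> close to \<open>R f\<close>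
in (a) shows that its right-hand side is nonnegative, which is (b). The form of \<open>S\<^sub>K\<^sub>,\<^sub>c\<close> is
\<open>c \<parallel>u\<parallel>\<^sup>2 + \<parallel>R u\<parallel>\<^sup>2\<close>, and so is its closure; since \<open>t\<^sub>H\<close> extends \<open>t(H)\<close>, the hypothesis of (c)
makes the right-hand side of (a) vanish.
\<close>

section \<open>Complex inner product spaces\<close>

lemma scaleC_zero_left [simp]: "0 *\<^sub>C (x::'a::complex_vector) = 0"
  using scaleC_add_left[of 0 0 x] by simp

lemma scaleC_minus_left: "(- a) *\<^sub>C x = - (a *\<^sub>C (x::'a::complex_vector))"
  using scaleC_add_left[of a "- a" x] by (simp add: eq_neg_iff_add_eq_0 add.commute)

lemma scaleC_zero_right [simp]: "a *\<^sub>C (0::'a::complex_vector) = 0"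
  using scaleC_add_right[of a 0 "0::'a"] by simp

lemma scaleC_minus_right: "a *\<^sub>C (- x) = - (a *\<^sub>C (x::'a::complex_vector))"
  using scaleC_add_right[of a x "- x"] by (simp add: eq_neg_iff_add_eq_0 add.commute)

lemma scaleC_diff_right: "a *\<^sub>C (x - y) = a *\<^sub>C x - a *\<^sub>C (y::'a::complex_vector)"
  using scaleC_add_right[of a x "- y"] by (simp add: scaleC_minus_right)

lemma scaleC_of_real: "complex_of_real r *\<^sub>C x = r *\<^sub>R (x::'a::complex_vector)"
  by (simp add: scaleR_scaleC)

lemma cinner_zero_left [simp]: "cinner 0 (y::'a::complex_inner) = 0"
  using cinner_add_left[of 0 0 y] by simp

lemma cinner_minus_left: "cinner (- x) (y::'a::complex_inner) = - cinner x y"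
  using cinner_add_left[of x "- x" y] by (simp add: eq_neg_iff_add_eq_0 add.commute)

lemma cinner_diff_left: "cinner (x - z) (y::'a::complex_inner) = cinner x y - cinner z y"
  using cinner_add_left[of x "- z" y] by (simp add: cinner_minus_left)

lemma cinner_scaleR_left: "cinner (r *\<^sub>R x) y = complex_of_real r * cinner x (y::'a::complex_inner)"
  by (simp add: scaleR_scaleC cinner_scaleC_left)

lemma cinner_add_right: "cinner x (y + z) = cinner x y + cinner x (z::'a::complex_inner)"
  by (metis cinner_commute cinner_add_left complex_cnj_add)

lemma cinner_diff_right: "cinner x (y - z) = cinner x y - cinner x (z::'a::complex_inner)"
  by (metis cinner_commute cinner_diff_left complex_cnj_diff)

lemma cinner_scaleC_right: "cinner x (a *\<^sub>C y) = cnj a * cinner x (y::'a::complex_inner)"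
  by (metis cinner_commute cinner_scaleC_left complex_cnj_mult)

lemma cinner_scaleR_right: "cinner x (r *\<^sub>R y) = complex_of_real r * cinner x (y::'a::complex_inner)"
  by (simp add: scaleR_scaleC cinner_scaleC_right)

lemma cinner_zero_right [simp]: "cinner x (0::'a::complex_inner) = 0"
  by (metis cinner_commute cinner_zero_left complex_cnj_zero)

lemma cinner_self: "cinner x x = complex_of_real ((norm (x::'a::complex_inner))\<^sup>2)"
  using cinner_real_nonneg[of x] norm_eq_sqrt_cinner[of x] by (simp add: complex_eq_iff)

lemma Re_cinner_commute: "Re (cinner y x) = Re (cinner x (y::'a::complex_inner))"
  by (subst cinner_commute) simp

lemma norm_add_square:
  "(norm (x + y))\<^sup>2 = (norm x)\<^sup>2 + 2 * Re (cinner x y) + (norm (y::'a::complex_inner))\<^sup>2"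
  using cinner_self[of "x + y"] cinner_self[of x] cinner_self[of y] Re_cinner_commute[of x y]
  by (simp add: cinner_add_left cinner_add_right complex_eq_iff)

lemma norm_diff_square:
  "(norm (x - y))\<^sup>2 = (norm x)\<^sup>2 - 2 * Re (cinner x y) + (norm (y::'a::complex_inner))\<^sup>2"
  using cinner_self[of "x - y"] cinner_self[of x] cinner_self[of y] Re_cinner_commute[of x y]
  by (simp add: cinner_diff_left cinner_diff_right complex_eq_iff)

lemma eq_if_diff_orthogonal:
  fixes x y :: "'a::complex_inner"
  assumes "cinner x (x - y) = 0" and "cinner y (x - y) = 0"
  shows "x = y"
  using assms cinner_eq_zero_iff[of "x - y"] by (simp add: cinner_diff_left)

text \<open>The Cauchy-Schwarz inequality for any nonnegative Hermitian form \<open>B\<close> follows from this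
with \<open>p = B[x,x]\<close>, \<open>q = B[y,y]\<close>, \<open>z = B[x,y]\<close>, expanding \<open>0 \<le> B[x + a y, x + a y]\<close>.\<close>
lemma quadratic_nonneg_imp_cmod_square_le:
  fixes p q :: real and z :: complex
  assumes p: "0 \<le> p" and q: "0 \<le> q"
    and nonneg: "\<And>a. 0 \<le> p + 2 * Re (a * cnj z) + (cmod a)\<^sup>2 * q"
  shows "(cmod z)\<^sup>2 \<le> p * q"
proof -
  have Re_scaled: "Re (complex_of_real t * z * cnj z) = t * (cmod z)\<^sup>2" for t
    by (metis Re_complex_of_real complex_norm_square mult.assoc of_real_mult of_real_power)
  show ?thesis
  proof (cases "q = 0")
    case True
    show ?thesis
    proof (rule ccontr)
      assume "\<not> ?thesis"
      then have z: "z \<noteq> 0" using True by auto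
      define t where "t = (p + 1) / (2 * (cmod z)\<^sup>2)"
      have "t * (cmod z)\<^sup>2 = (p + 1) / 2" using z by (simp add: t_def)
      moreover have "0 \<le> p + 2 * Re (complex_of_real (- t) * z * cnj z)"
        using nonneg[of "complex_of_real (- t) * z"] True by simp
      ultimately show False unfolding Re_scaled by simp
    qed
  next
    case False
    then have q_pos: "q > 0" using q by simp
    have "cmod (complex_of_real (- 1 / q) * z) = cmod z / q"
      using q_pos by (simp add: norm_mult norm_divide)
    then have sq: "(cmod (complex_of_real (- 1 / q) * z))\<^sup>2 * q = (cmod z)\<^sup>2 / q"
      using q_pos by (simp add: power2_eq_square)
    have "0 \<le> p + 2 * Re (complex_of_real (- 1 / q) * z * cnj z)
        + (cmod (complex_of_real (- 1 / q) * z))\<^sup>2 * q"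
      by (rule nonneg)
    then have "0 \<le> p - (cmod z)\<^sup>2 / q" unfolding Re_scaled sq by simp
    then show ?thesis using q_pos by (simp add: field_simps)
  qed
qed

lemma Re_expand_square:
  fixes a z :: complex and q :: real
  shows "Re (cnj a * z) + Re (a * cnj z) + Re (a * cnj a * complex_of_real q) =
    2 * Re (a * cnj z) + (cmod a)\<^sup>2 * q"
proof -
  have "Re (a * cnj a * complex_of_real q) = (cmod a)\<^sup>2 * q"
    by (metis Re_complex_of_real complex_norm_square mult.commute of_real_mult of_real_power)
  then show ?thesis by simp
qed

lemma cinner_Cauchy_Schwarz: "cmod (cinner x y) \<le> norm x * norm (y::'a::complex_inner)"
proof -
  have "(cmod (cinner x y))\<^sup>2 \<le> (norm x)\<^sup>2 * (norm y)\<^sup>2"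
  proof (rule quadratic_nonneg_imp_cmod_square_le)
    fix a
    have "0 \<le> Re (cinner (x + a *\<^sub>C y) (x + a *\<^sub>C y))" using cinner_real_nonneg by blast
    also have "cinner (x + a *\<^sub>C y) (x + a *\<^sub>C y) = cinner x x
        + (cnj a * cinner x y + a * cnj (cinner x y) + a * cnj a * cinner y y)"
      by (simp add: cinner_add_left cinner_add_right cinner_scaleC_left cinner_scaleC_right
          cinner_commute[of y x] algebra_simps)
    also have "Re \<dots> = (norm x)\<^sup>2 + (2 * Re (a * cnj (cinner x y)) + (cmod a)\<^sup>2 * (norm y)\<^sup>2)"
      by (simp only: cinner_self plus_complex.sel Re_complex_of_real Re_expand_square)
    finally show "0 \<le> (norm x)\<^sup>2 + 2 * Re (a * cnj (cinner x y)) + (cmod a)\<^sup>2 * (norm y)\<^sup>2"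
      by (simp only: add.assoc)
  qed auto
  then have "(cmod (cinner x y))\<^sup>2 \<le> (norm x * norm y)\<^sup>2" by (simp add: power_mult_distrib)
  then show ?thesis by (rule power2_le_imp_le) simp
qed

lemma bounded_bilinear_cinner: "bounded_bilinear (cinner :: 'a::complex_inner \<Rightarrow> 'a \<Rightarrow> complex)"
proof
  fix a a' b b' :: 'a and r :: real
  show "cinner (a + a') b = cinner a b + cinner a' b" by (rule cinner_add_left)
  show "cinner a (b + b') = cinner a b + cinner a b'" by (rule cinner_add_right)
  show "cinner (r *\<^sub>R a) b = r *\<^sub>R cinner a b" by (simp add: cinner_scaleR_left scaleR_conv_of_real)
  show "cinner a (r *\<^sub>R b) = r *\<^sub>R cinner a b" by (simp add: cinner_scaleR_right scaleR_conv_of_real)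
  show "\<exists>K. \<forall>a b::'a. norm (cinner a b) \<le> norm a * norm b * K"
    by (rule exI[of _ 1]) (simp add: cinner_Cauchy_Schwarz)
qed

lemmas tendsto_cinner [tendsto_intros] = bounded_bilinear.tendsto[OF bounded_bilinear_cinner]

section \<open>Representation of dominated functionals\<close>

instantiation complex :: complex_vector
begin
definition scaleC_complex_def [simp]: "a *\<^sub>C z = a * (z::complex)"
instance by standard (simp_all add: scaleR_conv_of_real algebra_simps)
end

instantiation prod :: (complex_vector, complex_vector) complex_vector
begin
definition scaleC_prod_def: "a *\<^sub>C p = (a *\<^sub>C fst p, a *\<^sub>C snd p)"
instance
  by standard (simp_all add: scaleC_prod_def scaleR_prod_def scaleR_scaleC scaleC_add_right
      scaleC_add_left scaleC_scaleC scaleC_one)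
end

lemma scaleC_Pair [simp]: "a *\<^sub>C (x, y) = (a *\<^sub>C x, a *\<^sub>C y)"
  by (simp add: scaleC_prod_def)

lemma scaleR_scaleC_commute: "r *\<^sub>R (a *\<^sub>C x) = a *\<^sub>C (r *\<^sub>R (x::'a::complex_vector))"
  by (simp add: scaleR_scaleC scaleC_scaleC mult.commute)

definition csubspace :: "'a::complex_vector set \<Rightarrow> bool" where
  "csubspace V \<longleftrightarrow> 0 \<in> V \<and> (\<forall>x\<in>V. \<forall>y\<in>V. x + y \<in> V) \<and> (\<forall>a. \<forall>x\<in>V. a *\<^sub>C x \<in> V)"

definition clinear_on :: "'a::complex_vector set \<Rightarrow> ('a \<Rightarrow> 'b::complex_vector) \<Rightarrow> bool" where
  "clinear_on V f \<longleftrightarrow>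
     (\<forall>x\<in>V. \<forall>y\<in>V. f (x + y) = f x + f y) \<and> (\<forall>a. \<forall>x\<in>V. f (a *\<^sub>C x) = a *\<^sub>C f x)"

lemma csubspace_add: "csubspace V \<Longrightarrow> x \<in> V \<Longrightarrow> y \<in> V \<Longrightarrow> x + y \<in> V"
  unfolding csubspace_def by blast

lemma csubspace_scaleC: "csubspace V \<Longrightarrow> x \<in> V \<Longrightarrow> a *\<^sub>C x \<in> V"
  unfolding csubspace_def by blast

lemma csubspace_diff: "csubspace V \<Longrightarrow> x \<in> V \<Longrightarrow> y \<in> V \<Longrightarrow> x - y \<in> V"
  using csubspace_add[of V x "(- 1) *\<^sub>C y"] csubspace_scaleC[of V y "- 1"]
  by (simp add: scaleC_minus_left scaleC_one)

lemma clinear_on_add: "clinear_on V f \<Longrightarrow> x \<in> V \<Longrightarrow> y \<in> V \<Longrightarrow> f (x + y) = f x + f y"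
  unfolding clinear_on_def by blast

lemma clinear_on_scaleC: "clinear_on V f \<Longrightarrow> x \<in> V \<Longrightarrow> f (a *\<^sub>C x) = a *\<^sub>C f x"
  unfolding clinear_on_def by blast

lemma real_zero_if_linear_le_quadratic:
  fixes d B :: real
  assumes B: "0 \<le> B" and le: "\<And>t. t * d \<le> t\<^sup>2 * B"
  shows "d = 0"
proof (rule ccontr)
  assume "d \<noteq> 0"
  define P where "P = 2 * B + 2"
  have P: "P > 0" "B / P < 1" using B by (simp_all add: P_def)
  have "d * d > 0" using \<open>d \<noteq> 0\<close> not_real_square_gt_zero by blast
  then have dd: "(d * d) / P > 0" using P by simp
  have "(d * d) / P * 1 \<le> (d * d) / P * (B / P)"
    using le[of "d / P"] by (simp add: power2_eq_square)
  then have "1 \<le> B / P" using dd by (simp only: mult_le_cancel_left_pos)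
  then show False using P by linarith
qed

lemma Cauchy_if_dist_square_le:
  fixes x :: "nat \<Rightarrow> 'a::real_normed_vector"
  assumes le: "\<And>m n. (norm (x m - x n))\<^sup>2 \<le> d m + d n" and d: "d \<longlonglongrightarrow> 0"
  shows "Cauchy x"
proof (rule CauchyI)
  fix e :: real
  assume "0 < e"
  then obtain N where "\<forall>n\<ge>N. norm (d n - 0) < e\<^sup>2 / 2"
    using LIMSEQ_D[OF d, of "e\<^sup>2 / 2"] by auto
  then have N: "\<And>n. n \<ge> N \<Longrightarrow> d n < e\<^sup>2 / 2" by auto
  show "\<exists>M. \<forall>m\<ge>M. \<forall>n\<ge>M. norm (x m - x n) < e"
  proof (intro exI allI impI)
    fix m n assume "N \<le> m" "N \<le> n"
    then have "d m + d n < e\<^sup>2" using N[of m] N[of n] by linarith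
    then have "(norm (x m - x n))\<^sup>2 < e\<^sup>2" using le[of m n] by linarith
    then show "norm (x m - x n) < e" using \<open>0 < e\<close> by (simp add: power_less_imp_less_base)
  qed
qed

lemma parallelogram_midpoint:
  fixes g g' :: "'a::complex_inner" and l l' :: complex
  shows "Re ((l + l') / 2) - (norm ((1 / 2) *\<^sub>R (g + g')))\<^sup>2 / 2 =
    (Re l - (norm g)\<^sup>2 / 2) / 2 + (Re l' - (norm g')\<^sup>2 / 2) / 2 + (norm (g - g'))\<^sup>2 / 8"
proof -
  have "(norm ((1 / 2) *\<^sub>R (g + g')))\<^sup>2 = (norm (g + g'))\<^sup>2 / 4"
    by (simp add: power2_eq_square)
  moreover have "Re ((l + l') / 2) = (Re l + Re l') / 2" by simp
  ultimately show ?thesis unfolding norm_add_square norm_diff_square by (simp add: field_simps)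
qed

text \<open>The representing element is the limit of a maximizing sequence of the concave functional
\<open>gain\<close>; maximizing sequences are Cauchy by the parallelogram law.\<close>

locale dominated_functional =
  fixes V :: "'v::complex_vector set" and G :: "'v \<Rightarrow> 'k::chilbert_space"
    and L :: "'v \<Rightarrow> complex" and C :: real
  assumes subspace: "csubspace V" and G_linear: "clinear_on V G" and L_linear: "clinear_on V L"
    and dominated: "\<And>x. x \<in> V \<Longrightarrow> cmod (L x) \<le> C * norm (G x)"
begin

definition gain :: "'v \<Rightarrow> real" where
  "gain x = Re (L x) - (norm (G x))\<^sup>2 / 2"

definition sup_gain :: real where
  "sup_gain = Sup (gain ` V)"

lemma gain_le_sup_gain: "x \<in> V \<Longrightarrow> gain x \<le> sup_gain"
proof -
  have "gain y \<le> C\<^sup>2 / 2" if "y \<in> V" for y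
  proof -
    have "Re (L y) \<le> C * norm (G y)" using dominated[OF that] complex_Re_le_cmod[of "L y"] by linarith
    moreover have "0 \<le> (C - norm (G y))\<^sup>2" by simp
    ultimately show ?thesis unfolding gain_def by (simp add: power2_eq_square algebra_simps)
  qed
  then have "bdd_above (gain ` V)" by (rule bdd_aboveI2)
  then show "x \<in> V \<Longrightarrow> gain x \<le> sup_gain" unfolding sup_gain_def by (simp add: cSup_upper)
qed

lemma dist_square_le_gain_defects:
  assumes x: "x \<in> V" and y: "y \<in> V"
  shows "(norm (G x - G y))\<^sup>2 \<le> 4 * (sup_gain - gain x) + 4 * (sup_gain - gain y)"
proof -
  define z where "z = (1 / 2) *\<^sub>C (x + y)"
  have xy: "x + y \<in> V" using subspace x y by (rule csubspace_add)
  have "z \<in> V" unfolding z_def using subspace xy by (rule csubspace_scaleC)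
  moreover have "G z = (1 / 2 :: real) *\<^sub>R (G x + G y)"
    unfolding z_def using xy x y G_linear by (simp add: clinear_on_add clinear_on_scaleC scaleR_scaleC)
  moreover have "L z = (L x + L y) / 2"
    unfolding z_def using xy x y L_linear by (simp add: clinear_on_add clinear_on_scaleC)
  ultimately have "gain x / 2 + gain y / 2 + (norm (G x - G y))\<^sup>2 / 8 \<le> sup_gain"
    using gain_le_sup_gain[of z] unfolding gain_def by (simp only: parallelogram_midpoint)
  then show ?thesis by simp
qed

lemma maximizing_sequence:
  obtains s where "\<And>n. s n \<in> V" and "(\<lambda>n. gain (s n)) \<longlonglongrightarrow> sup_gain"
proof -
  have "0 \<in> V" using subspace by (simp add: csubspace_def)
  then have nonempty: "gain ` V \<noteq> {}" by blast
  have "\<exists>x\<in>V. sup_gain - inverse (real (Suc n)) < gain x" for n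
  proof -
    have "sup_gain - inverse (real (Suc n)) < Sup (gain ` V)" unfolding sup_gain_def by simp
    then obtain y where "y \<in> gain ` V" "sup_gain - inverse (real (Suc n)) < y"
      using less_cSupD[OF nonempty] by blast
    then show ?thesis by blast
  qed
  then obtain s where s: "\<And>n. s n \<in> V" and gt: "\<And>n. sup_gain - inverse (real (Suc n)) < gain (s n)"
    by metis
  have "(\<lambda>n. sup_gain - inverse (real (Suc n))) \<longlonglongrightarrow> sup_gain - 0"
    by (intro tendsto_intros LIMSEQ_inverse_real_of_nat)
  then have lower_lim: "(\<lambda>n. sup_gain - inverse (real (Suc n))) \<longlonglongrightarrow> sup_gain" by simp
  have lower: "\<forall>\<^sub>F n in sequentially. sup_gain - inverse (real (Suc n)) \<le> gain (s n)"
    using gt by (simp add: less_imp_le)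
  have upper: "\<forall>\<^sub>F n in sequentially. gain (s n) \<le> sup_gain"
    using s gain_le_sup_gain by (simp add: always_eventually)
  have "(\<lambda>n. gain (s n)) \<longlonglongrightarrow> sup_gain"
    by (rule tendsto_sandwich[OF lower upper lower_lim tendsto_const])
  with s show thesis by (rule that)
qed

text \<open>Comparing \<open>gain (s n + t q) \<le> sup_gain\<close> with \<open>gain (s n) \<rightarrow> sup_gain\<close> shows that the
derivative at \<open>t = 0\<close> of the limit quadratic in \<open>t\<close> vanishes.\<close>
lemma Re_eq_at_maximizing_limit:
  assumes s: "\<And>n. s n \<in> V" and gain_lim: "(\<lambda>n. gain (s n)) \<longlonglongrightarrow> sup_gain"
    and G_lim: "(\<lambda>n. G (s n)) \<longlonglongrightarrow> k" and q: "q \<in> V"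
  shows "Re (L q) = Re (cinner k (G q))"
proof -
  have "t * (Re (L q) - Re (cinner k (G q))) \<le> t\<^sup>2 * ((norm (G q))\<^sup>2 / 2)" for t :: real
  proof -
    have le: "t * (Re (L q) - Re (cinner (G (s n)) (G q)))
        \<le> (sup_gain - gain (s n)) + t\<^sup>2 * ((norm (G q))\<^sup>2 / 2)" for n
    proof -
      define p where "p = s n + complex_of_real t *\<^sub>C q"
      have tq: "complex_of_real t *\<^sub>C q \<in> V" using subspace q by (rule csubspace_scaleC)
      have "p \<in> V" unfolding p_def using subspace s tq by (rule csubspace_add)
      moreover have "G p = G (s n) + t *\<^sub>R G q"
        unfolding p_def clinear_on_add[OF G_linear s tq] clinear_on_scaleC[OF G_linear q]
        by (simp add: scaleC_of_real)
      moreover have "L p = L (s n) + complex_of_real t * L q" unfolding p_def using s q tq L_linear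
        by (simp add: clinear_on_add clinear_on_scaleC)
      moreover have "(norm (G (s n) + t *\<^sub>R G q))\<^sup>2
          = (norm (G (s n)))\<^sup>2 + 2 * t * Re (cinner (G (s n)) (G q)) + t\<^sup>2 * (norm (G q))\<^sup>2"
        unfolding norm_add_square by (simp add: cinner_scaleR_right power_mult_distrib)
      ultimately have "p \<in> V" and "gain p = gain (s n) + t * Re (L q)
          - t * Re (cinner (G (s n)) (G q)) - t\<^sup>2 * ((norm (G q))\<^sup>2 / 2)"
        unfolding gain_def by (simp_all add: algebra_simps)
      then show ?thesis using gain_le_sup_gain[of p] by (simp add: algebra_simps)
    qed
    have "(\<lambda>n. t * (Re (L q) - Re (cinner (G (s n)) (G q)))) \<longlonglongrightarrow> t * (Re (L q) - Re (cinner k (G q)))"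
      by (intro tendsto_intros G_lim)
    moreover have "(\<lambda>n. (sup_gain - gain (s n)) + t\<^sup>2 * ((norm (G q))\<^sup>2 / 2))
        \<longlonglongrightarrow> (sup_gain - sup_gain) + t\<^sup>2 * ((norm (G q))\<^sup>2 / 2)"
      by (intro tendsto_intros gain_lim)
    moreover have "\<exists>N. \<forall>n\<ge>N. t * (Re (L q) - Re (cinner (G (s n)) (G q)))
        \<le> (sup_gain - gain (s n)) + t\<^sup>2 * ((norm (G q))\<^sup>2 / 2)"
      using le by blast
    ultimately have "t * (Re (L q) - Re (cinner k (G q)))
        \<le> (sup_gain - sup_gain) + t\<^sup>2 * ((norm (G q))\<^sup>2 / 2)"
      by (rule LIMSEQ_le)
    then show ?thesis by simp
  qed
  then have "Re (L q) - Re (cinner k (G q)) = 0" by (intro real_zero_if_linear_le_quadratic[of "(norm (G q))\<^sup>2 / 2"]) auto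
  then show ?thesis by simp
qed

lemma maximizing_limit_represents:
  assumes s: "\<And>n. s n \<in> V" and gain_lim: "(\<lambda>n. gain (s n)) \<longlonglongrightarrow> sup_gain"
    and G_lim: "(\<lambda>n. G (s n)) \<longlonglongrightarrow> k" and q: "q \<in> V"
  shows "L q = cinner (G q) k"
proof -
  have "Re (L (\<i> *\<^sub>C q)) = Re (cinner k (G (\<i> *\<^sub>C q)))"
    using subspace q by (intro Re_eq_at_maximizing_limit[OF s gain_lim G_lim] csubspace_scaleC)
  then have "- Im (L q) = Im (cinner k (G q))"
    using q L_linear G_linear by (simp add: clinear_on_scaleC cinner_scaleC_right)
  moreover have "Re (L q) = Re (cinner k (G q))" by (rule Re_eq_at_maximizing_limit[OF assms])
  ultimately show ?thesis by (subst cinner_commute) (simp add: complex_eq_iff)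
qed

theorem representation: "\<exists>k\<in>closure (G ` V). \<forall>x\<in>V. L x = cinner (G x) k"
proof -
  obtain s where s: "\<And>n. s n \<in> V" and gain_lim: "(\<lambda>n. gain (s n)) \<longlonglongrightarrow> sup_gain"
    using maximizing_sequence by blast
  have "(\<lambda>n. 4 * (sup_gain - gain (s n))) \<longlonglongrightarrow> 4 * (sup_gain - sup_gain)"
    by (intro tendsto_intros gain_lim)
  then have "Cauchy (\<lambda>n. G (s n))"
    using dist_square_le_gain_defects[OF s s] by (intro Cauchy_if_dist_square_le) auto
  then obtain k where k: "(\<lambda>n. G (s n)) \<longlonglongrightarrow> k" using Cauchy_convergent_iff convergent_def by blast
  then have "k \<in> closure (G ` V)"
    unfolding closure_sequential using s by (intro exI[of _ "\<lambda>n. G (s n)"]) auto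
  then show ?thesis using maximizing_limit_represents[OF s gain_lim k] by blast
qed

end

section \<open>Linear relations\<close>

lemma lin_rel_iff_csubspace: "lin_rel T \<longleftrightarrow> csubspace T"
  unfolding lin_rel_def csubspace_def scaleC_prod_def plus_prod_def zero_prod_def ..

lemma lin_rel_add: "lin_rel T \<Longrightarrow> (x, y) \<in> T \<Longrightarrow> (u, v) \<in> T \<Longrightarrow> (x + u, y + v) \<in> T"
  using csubspace_add[of T "(x, y)" "(u, v)"] by (simp add: lin_rel_iff_csubspace)

lemma lin_rel_scaleC: "lin_rel T \<Longrightarrow> (x, y) \<in> T \<Longrightarrow> (a *\<^sub>C x, a *\<^sub>C y) \<in> T"
  using csubspace_scaleC[of T "(x, y)" a] by (simp add: lin_rel_iff_csubspace)

lemma lin_rel_diff: "lin_rel T \<Longrightarrow> (x, y) \<in> T \<Longrightarrow> (u, v) \<in> T \<Longrightarrow> (x - u, y - v) \<in> T"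
  using csubspace_diff[of T "(x, y)" "(u, v)"] by (simp add: lin_rel_iff_csubspace)

lemma rdomI: "(x, y) \<in> T \<Longrightarrow> x \<in> rdom T"
  unfolding rdom_def by (metis fst_conv image_eqI)

lemma rdomE: "x \<in> rdom T \<Longrightarrow> (\<And>y. (x, y) \<in> T \<Longrightarrow> P) \<Longrightarrow> P"
  unfolding rdom_def by (metis imageE prod.collapse)

lemma mem_radj_iff: "(h, k) \<in> radj T \<longleftrightarrow> (\<forall>f g. (f, g) \<in> T \<longrightarrow> cinner g h = cinner f k)"
  by (auto simp: radj_def)

lemma lin_rel_radj: "lin_rel (radj T)"
proof -
  have mem: "p \<in> radj T \<longleftrightarrow> (\<forall>f g. (f, g) \<in> T \<longrightarrow> cinner g (fst p) = cinner f (snd p))" for p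
    by (cases p) (simp add: mem_radj_iff)
  show ?thesis unfolding lin_rel_def by (auto simp: mem cinner_add_right cinner_scaleC_right)
qed

lemma closed_radj: "closed (radj (T :: ('a::complex_inner \<times> 'b::complex_inner) set))"
  unfolding closed_sequential_limits
proof (intro allI impI, elim conjE)
  fix x :: "nat \<Rightarrow> 'b \<times> 'a" and l
  assume x: "\<forall>n. x n \<in> radj T" and lim: "x \<longlonglongrightarrow> l"
  show "l \<in> radj T"
    unfolding radj_def
  proof (clarify)
    fix h k f g assume l: "l = (h, k)" and fg: "(f, g) \<in> T"
    have "(\<lambda>n. fst (x n)) \<longlonglongrightarrow> h" "(\<lambda>n. snd (x n)) \<longlonglongrightarrow> k"
      using tendsto_fst[OF lim] tendsto_snd[OF lim] l by simp_all
    then have "(\<lambda>n. cinner g (fst (x n))) \<longlonglongrightarrow> cinner g h"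
      and "(\<lambda>n. cinner f (snd (x n))) \<longlonglongrightarrow> cinner f k"
      by (auto intro: tendsto_intros)
    moreover have "cinner g (fst (x n)) = cinner f (snd (x n))" for n
    proof -
      have "(fst (x n), snd (x n)) \<in> radj T" using x by simp
      then show ?thesis using fg unfolding mem_radj_iff by blast
    qed
    ultimately show "cinner g h = cinner f k" using LIMSEQ_unique by fastforce
  qed
qed

lemma csubspace_rmul: "lin_rel T \<Longrightarrow> csubspace (rmul T)"
  unfolding csubspace_def rmul_def using lin_rel_add[of T 0] lin_rel_scaleC[of T 0]
  by (auto simp: lin_rel_def)

lemma closed_rmul: "closed T \<Longrightarrow> closed (rmul (T :: ('a::real_normed_vector \<times> 'b::real_normed_vector) set))"
proof -
  assume "closed T"
  moreover have "rmul T = Pair 0 -` T" unfolding rmul_def by auto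
  ultimately show ?thesis by (simp add: continuous_closed_vimage)
qed

section \<open>Orthogonal projections and the regular part\<close>

lemma orthogonal_closure:
  fixes A :: "'a::complex_inner set"
  assumes "\<And>x. x \<in> A \<Longrightarrow> cinner x m = 0" and "y \<in> closure A"
  shows "cinner y m = 0"
proof -
  obtain x where x: "\<And>n. x n \<in> A" and lim: "x \<longlonglongrightarrow> y"
    using assms(2) unfolding closure_sequential by blast
  have "(\<lambda>n. cinner (x n) m) \<longlonglongrightarrow> cinner y m" by (intro tendsto_intros lim)
  then show ?thesis using assms(1)[OF x] by (simp add: LIMSEQ_const_iff)
qed

lemma orth_proj_eqI:
  assumes M: "csubspace M" and p: "p \<in> M" and orth: "\<forall>m\<in>M. cinner (x - p) m = 0"
  shows "orth_proj M x = p"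
  unfolding orth_proj_def
proof (rule the_equality)
  show "p \<in> M \<and> (\<forall>m\<in>M. cinner (x - p) m = 0)" using p orth by blast
next
  fix q assume q: "q \<in> M \<and> (\<forall>m\<in>M. cinner (x - q) m = 0)"
  have "p - q \<in> M" using M p q by (simp add: csubspace_diff)
  then have "x - q = x - p"
    using q orth by (intro eq_if_diff_orthogonal) (simp_all add: algebra_simps)
  then show "q = p" by simp
qed

lemma orth_proj:
  fixes M :: "'a::chilbert_space set"
  assumes M: "csubspace M" "closed M"
  shows "orth_proj M x \<in> M" and "\<forall>m\<in>M. cinner (x - orth_proj M x) m = 0"
proof -
  interpret dominated_functional M id "\<lambda>m. cinner m x" "norm x"
    using M(1) cinner_Cauchy_Schwarz
    by unfold_locales (auto simp: clinear_on_def cinner_add_left cinner_scaleC_left mult.commute)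
  obtain k where k: "k \<in> M" and rep: "\<forall>m\<in>M. cinner m x = cinner m k"
    using representation M(2) by (auto simp: closure_closed)
  have "\<forall>m\<in>M. cinner (x - k) m = 0"
    using rep by (metis cinner_commute cinner_diff_right complex_cnj_zero right_minus_eq)
  with k have "orth_proj M x = k" by (rule orth_proj_eqI[OF M(1)])
  then show "orth_proj M x \<in> M" and "\<forall>m\<in>M. cinner (x - orth_proj M x) m = 0"
    using k \<open>\<forall>m\<in>M. cinner (x - k) m = 0\<close> by simp_all
qed

context
  fixes T :: "('a::complex_inner \<times> 'b::chilbert_space) set"
  assumes lin: "lin_rel T" and closed: "closed T"
begin

lemma rreg_app_mem:
  assumes f: "f \<in> rdom T"
  shows "(f, rapp (rreg T) f) \<in> T" and "\<forall>m\<in>rmul T. cinner (rapp (rreg T) f) m = 0"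
proof -
  have M: "csubspace (rmul T)" "closed (rmul T)"
    using lin closed by (simp_all add: csubspace_rmul closed_rmul)
  obtain g where "(f, g) \<in> T" using f by (rule rdomE)
  then have "(f, g - orth_proj (rmul T) g) \<in> rreg T" unfolding rreg_def by blast
  then have "(f, rapp (rreg T) f) \<in> rreg T" unfolding rapp_def by (rule someI)
  then obtain g0 where g0: "(f, g0) \<in> T" and R: "rapp (rreg T) f = g0 - orth_proj (rmul T) g0"
    unfolding rreg_def by auto
  have "(0, orth_proj (rmul T) g0) \<in> T" using orth_proj(1)[OF M] unfolding rmul_def by simp
  from lin_rel_diff[OF lin g0 this] show "(f, rapp (rreg T) f) \<in> T" unfolding R by simp
  show "\<forall>m\<in>rmul T. cinner (rapp (rreg T) f) m = 0" unfolding R by (rule orth_proj(2)[OF M])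
qed

lemma rreg_app_eqI:
  assumes fk: "(f, k) \<in> T" and orth: "\<forall>m\<in>rmul T. cinner k m = 0"
  shows "rapp (rreg T) f = k"
proof -
  have f: "f \<in> rdom T" using fk by (rule rdomI)
  have "(f - f, rapp (rreg T) f - k) \<in> T" using lin_rel_diff[OF lin rreg_app_mem(1)[OF f] fk] .
  then have "rapp (rreg T) f - k \<in> rmul T" unfolding rmul_def by simp
  then show ?thesis using rreg_app_mem(2)[OF f] orth by (blast intro: eq_if_diff_orthogonal)
qed

lemma rreg_app_diff:
  assumes "u \<in> rdom T" and "v \<in> rdom T"
  shows "rapp (rreg T) (u - v) = rapp (rreg T) u - rapp (rreg T) v"
proof (rule rreg_app_eqI)
  show "(u - v, rapp (rreg T) u - rapp (rreg T) v) \<in> T"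
    using lin_rel_diff[OF lin rreg_app_mem(1)[OF assms(1)] rreg_app_mem(1)[OF assms(2)]] .
  show "\<forall>m\<in>rmul T. cinner (rapp (rreg T) u - rapp (rreg T) v) m = 0"
    using rreg_app_mem(2)[OF assms(1)] rreg_app_mem(2)[OF assms(2)] by (simp add: cinner_diff_left)
qed

end

section \<open>Forms and their closures\<close>

lemma form_conv_rel_form_iff:
  "form_conv (rel_form T) f s \<longleftrightarrow> (\<forall>n. s n \<in> rdom T) \<and> s \<longlonglongrightarrow> f \<and>
     (\<forall>e>0. \<exists>N. \<forall>n\<ge>N. \<forall>m\<ge>N. norm (tform T (s n - s m) (s n - s m)) < e)"
  unfolding form_conv_def rel_form_def by simp

lemma form_conv_const: "f \<in> rdom T \<Longrightarrow> form_conv (rel_form T) f (\<lambda>n. f)"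
  unfolding form_conv_rel_form_iff tform_def by simp

lemma form_closure_eqI:
  assumes "form_conv t f s\<^sub>0"
    and lim: "\<And>s s'. form_conv t f s \<Longrightarrow> form_conv t f s' \<Longrightarrow> (\<lambda>n. snd t (s n) (s' n)) \<longlonglongrightarrow> v"
  shows "snd (form_closure t) f f = v"
  unfolding form_closure_def snd_conv
proof (rule the_equality)
  show "\<forall>s s'. form_conv t f s \<longrightarrow> form_conv t f s' \<longrightarrow> (\<lambda>n. snd t (s n) (s' n)) \<longlonglongrightarrow> v"
    using lim by blast
next
  fix v' assume "\<forall>s s'. form_conv t f s \<longrightarrow> form_conv t f s' \<longrightarrow> (\<lambda>n. snd t (s n) (s' n)) \<longlonglongrightarrow> v'"
  then have "(\<lambda>n. snd t (s\<^sub>0 n) (s\<^sub>0 n)) \<longlonglongrightarrow> v'" using assms(1) by blast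
  then show "v' = v" using lim[OF assms(1) assms(1)] by (rule LIMSEQ_unique)
qed

lemma vanishing_add_Cauchy_square:
  fixes s :: "nat \<Rightarrow> 'a::real_normed_vector" and a :: "nat \<Rightarrow> nat \<Rightarrow> real"
  assumes a: "\<forall>e>0. \<exists>N. \<forall>n\<ge>N. \<forall>m\<ge>N. a n m < e" and s: "Cauchy s"
  shows "\<forall>e>0. \<exists>N. \<forall>n\<ge>N. \<forall>m\<ge>N. a n m + \<bar>c\<bar> * (norm (s n - s m))\<^sup>2 < e"
proof (intro allI impI)
  fix e :: real assume e: "0 < e"
  obtain N\<^sub>1 where N\<^sub>1: "\<forall>n\<ge>N\<^sub>1. \<forall>m\<ge>N\<^sub>1. a n m < e / 2" using a e by (meson half_gt_zero)
  define \<delta> where "\<delta> = sqrt (e / (2 * (\<bar>c\<bar> + 1)))"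
  have "\<delta> > 0" unfolding \<delta>_def using e by (simp add: add_pos_nonneg)
  then obtain N\<^sub>2 where N\<^sub>2: "\<forall>m\<ge>N\<^sub>2. \<forall>n\<ge>N\<^sub>2. norm (s m - s n) < \<delta>" using CauchyD[OF s] by blast
  have "(\<bar>c\<bar> + 1) * \<delta>\<^sup>2 = (\<bar>c\<bar> + 1) * (e / (2 * (\<bar>c\<bar> + 1)))"
    unfolding \<delta>_def using e by (simp add: add_pos_nonneg)
  also have "\<dots> = e / 2" using abs_ge_zero[of c] by (simp add: field_simps)
  finally have "(\<bar>c\<bar> + 1) * \<delta>\<^sup>2 = e / 2" .
  show "\<exists>N. \<forall>n\<ge>N. \<forall>m\<ge>N. a n m + \<bar>c\<bar> * (norm (s n - s m))\<^sup>2 < e"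
  proof (intro exI allI impI)
    fix n m assume "max N\<^sub>1 N\<^sub>2 \<le> n" "max N\<^sub>1 N\<^sub>2 \<le> m"
    then have "a n m < e / 2" and "norm (s n - s m) < \<delta>" using N\<^sub>1 N\<^sub>2 by auto
    then have "(\<bar>c\<bar> + 1) * (norm (s n - s m))\<^sup>2 < (\<bar>c\<bar> + 1) * \<delta>\<^sup>2"
      by (intro mult_strict_left_mono power_strict_mono) auto
    moreover have "\<bar>c\<bar> * (norm (s n - s m))\<^sup>2 \<le> (\<bar>c\<bar> + 1) * (norm (s n - s m))\<^sup>2"
      by (intro mult_right_mono) auto
    ultimately show "a n m + \<bar>c\<bar> * (norm (s n - s m))\<^sup>2 < e"
      using \<open>a n m < e / 2\<close> \<open>(\<bar>c\<bar> + 1) * \<delta>\<^sup>2 = e / 2\<close> by linarith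
  qed
qed

lemma form_conv_shifted_vanishing:
  assumes "form_conv (rel_form T) f s"
  shows "\<forall>e>0. \<exists>N. \<forall>n\<ge>N. \<forall>m\<ge>N. norm (tform T (s n - s m) (s n - s m)) + \<bar>c\<bar> * (norm (s n - s m))\<^sup>2 < e"
proof -
  have "s \<longlonglongrightarrow> f" and "\<forall>e>0. \<exists>N. \<forall>n\<ge>N. \<forall>m\<ge>N. norm (tform T (s n - s m) (s n - s m)) < e"
    using assms unfolding form_conv_rel_form_iff by blast+
  then show ?thesis by (intro vanishing_add_Cauchy_square LIMSEQ_imp_Cauchy)
qed

lemma le_square_if_le_sqrt_mult:
  fixes x \<epsilon> :: real
  assumes "0 \<le> x" and "0 < \<epsilon>" and le: "x \<le> sqrt x * \<epsilon>"
  shows "x \<le> \<epsilon>\<^sup>2"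
proof (cases "x = 0")
  case False
  then have pos: "sqrt x > 0" using assms(1) by simp
  have "sqrt x * sqrt x \<le> sqrt x * \<epsilon>" using le assms(1) by simp
  then have "sqrt x \<le> \<epsilon>" by (simp only: mult_le_cancel_left_pos[OF pos])
  then have "sqrt x * sqrt x \<le> \<epsilon> * \<epsilon>" using pos assms(2) by (intro mult_mono) auto
  then show ?thesis using assms(1) by (simp add: power2_eq_square)
qed simp

section \<open>A semibounded selfadjoint extension\<close>

locale semibounded_extension =
  fixes S H :: "('a::chilbert_space \<times> 'a) set" and Q :: "'a \<Rightarrow> 'k::chilbert_space" and c :: real
  assumes lin_rel_S: "lin_rel S" and Q_rep: "representing_map S c Q"
    and H_selfadjoint: "selfadjoint H" and lin_rel_H: "lin_rel H"
    and S_subset_H: "S \<subseteq> H" and H_bounded_below: "bounded_below H c"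
begin

abbreviation J :: "('k \<times> 'a) set" where
  "J \<equiv> companion S c Q"

abbreviation R :: "'a \<Rightarrow> 'k" where
  "R \<equiv> rapp (rreg (radj J))"

lemma H_symmetric:
  assumes "(x, x') \<in> H" and "(y, y') \<in> H"
  shows "cinner x' y = cinner x y'"
proof -
  have "(y, y') \<in> radj H" using assms(2) H_selfadjoint unfolding selfadjoint_def by simp
  then show ?thesis using assms(1) unfolding mem_radj_iff by blast
qed

lemma tform_eq_cinner:
  assumes T: "T \<subseteq> H" and x: "(x, x') \<in> T" and y: "y \<in> rdom H"
  shows "tform T x y = cinner x' y"
proof -
  define x'' where "x'' = (SOME z. (x, z) \<in> T)"
  have "(x, x'') \<in> T" unfolding x''_def using x by (rule someI)
  then have "(x - x, x'' - x') \<in> H" using lin_rel_diff[OF lin_rel_H] x T by blast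
  moreover obtain y' where "(y, y') \<in> H" using y by (rule rdomE)
  ultimately have "cinner (x'' - x') y = cinner 0 y'" using H_symmetric by simp
  then show ?thesis unfolding tform_def x''_def[symmetric] by (simp add: cinner_diff_left)
qed

lemma tform_H: "(x, x') \<in> H \<Longrightarrow> tform H x x = cinner x' x"
  using tform_eq_cinner[of H] by (blast intro: rdomI)

text \<open>\<open>cinner (x' - c *\<^sub>R x) y\<close> is \<open>(t(H) - c)[x, y]\<close> for \<open>{x, x'} \<in> H\<close>.\<close>
lemma tform_H_shifted:
  assumes "(x, x') \<in> H"
  shows "tform H x x - complex_of_real (c * (norm x)\<^sup>2) = cinner (x' - c *\<^sub>R x) x"
  by (simp add: tform_H[OF assms] cinner_diff_left cinner_scaleR_left cinner_self[of x])

lemma H_shifted_nonneg: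
  assumes "(x, x') \<in> H"
  shows "Im (cinner (x' - c *\<^sub>R x) x) = 0" and "0 \<le> Re (cinner (x' - c *\<^sub>R x) x)"
  using assms H_bounded_below
  by (auto simp: bounded_below_def less_eq_complex_def cinner_diff_left cinner_scaleR_left cinner_self)

lemma H_shifted_hermitian:
  "(x, x') \<in> H \<Longrightarrow> (y, y') \<in> H \<Longrightarrow> cinner (y' - c *\<^sub>R y) x = cnj (cinner (x' - c *\<^sub>R x) y)"
  using H_symmetric[of y y' x x'] cinner_commute[of x' y] cinner_commute[of x y]
  by (simp add: cinner_diff_left cinner_scaleR_left)

lemma H_shifted_Cauchy_Schwarz:
  assumes x: "(x, x') \<in> H" and y: "(y, y') \<in> H"
  shows "(cmod (cinner (x' - c *\<^sub>R x) y))\<^sup>2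
    \<le> Re (cinner (x' - c *\<^sub>R x) x) * Re (cinner (y' - c *\<^sub>R y) y)"
proof (rule quadratic_nonneg_imp_cmod_square_le)
  show "0 \<le> Re (cinner (x' - c *\<^sub>R x) x)" "0 \<le> Re (cinner (y' - c *\<^sub>R y) y)"
    using H_shifted_nonneg x y by auto
  fix a
  define w v where "w = x' - c *\<^sub>R x" and "v = y' - c *\<^sub>R y"
  have "(x + a *\<^sub>C y, x' + a *\<^sub>C y') \<in> H"
    using lin_rel_add[OF lin_rel_H x lin_rel_scaleC[OF lin_rel_H y]] .
  then have "0 \<le> Re (cinner ((x' + a *\<^sub>C y') - c *\<^sub>R (x + a *\<^sub>C y)) (x + a *\<^sub>C y))"
    by (rule H_shifted_nonneg)
  also have "(x' + a *\<^sub>C y') - c *\<^sub>R (x + a *\<^sub>C y) = w + a *\<^sub>C v"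
    unfolding w_def v_def
    by (simp add: scaleC_diff_right scaleR_add_right scaleR_scaleC_commute algebra_simps)
  also have "cinner (w + a *\<^sub>C v) (x + a *\<^sub>C y)
      = cinner w x + (cnj a * cinner w y + a * cinner v x + a * cnj a * cinner v y)"
    by (simp add: cinner_add_left cinner_add_right cinner_scaleC_left cinner_scaleC_right algebra_simps)
  also have "cinner v x = cnj (cinner w y)" unfolding w_def v_def by (rule H_shifted_hermitian[OF x y])
  also have "cinner v y = complex_of_real (Re (cinner v y))"
    using H_shifted_nonneg(1)[OF y] by (simp add: v_def complex_eq_iff)
  finally have "0 \<le> Re (cinner w x) + (2 * Re (a * cnj (cinner w y)) + (cmod a)\<^sup>2 * Re (cinner v y))"
    by (simp only: plus_complex.sel Re_expand_square)
  then show "0 \<le> Re (cinner (x' - c *\<^sub>R x) x) + 2 * Re (a * cnj (cinner (x' - c *\<^sub>R x) y))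
      + (cmod a)\<^sup>2 * Re (cinner (y' - c *\<^sub>R y) y)"
    unfolding w_def v_def by (simp only: add.assoc)
qed

lemma Q_clinear_on: "clinear_on (rdom S) Q"
proof -
  have lin: "Q (a *\<^sub>C \<phi> + b *\<^sub>C \<psi>) = a *\<^sub>C Q \<phi> + b *\<^sub>C Q \<psi>"
    if "\<phi> \<in> rdom S" "\<psi> \<in> rdom S" for \<phi> \<psi> a b
    using Q_rep that unfolding representing_map_def by blast
  show ?thesis
    unfolding clinear_on_def using lin[of _ _ 1 1] lin[of _ _ _ 0] by (simp add: scaleC_one)
qed

lemma S_shifted_form:
  assumes "(\<phi>, \<phi>') \<in> S"
  shows "cinner (\<phi>' - c *\<^sub>R \<phi>) \<phi> = cinner (Q \<phi>) (Q \<phi>)"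
proof -
  have "\<phi> \<in> rdom S" and "\<phi> \<in> rdom H" using assms S_subset_H by (auto intro: rdomI)
  then have "tform S \<phi> \<phi> = complex_of_real c * cinner \<phi> \<phi> + cinner (Q \<phi>) (Q \<phi>)"
    and "tform S \<phi> \<phi> = cinner \<phi>' \<phi>"
    using Q_rep tform_eq_cinner[OF S_subset_H assms] unfolding representing_map_def by blast+
  then show ?thesis by (simp add: cinner_diff_left cinner_scaleR_left)
qed

lemma mem_radj_companion:
  "(x, y) \<in> radj J \<longleftrightarrow> (\<forall>\<phi> \<phi>'. (\<phi>, \<phi>') \<in> S \<longrightarrow> cinner (\<phi>' - c *\<^sub>R \<phi>) x = cinner (Q \<phi>) y)"
  unfolding mem_radj_iff companion_def by auto

lemma mem_rmul_radj_companion: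
  "m \<in> rmul (radj J) \<longleftrightarrow> (\<forall>\<phi> \<phi>'. (\<phi>, \<phi>') \<in> S \<longrightarrow> cinner (Q \<phi>) m = 0)"
  unfolding rmul_def mem_radj_companion by simp

lemma R_mem:
  assumes "f \<in> rdom (radj J)"
  shows "(f, R f) \<in> radj J" and "\<forall>m\<in>rmul (radj J). cinner (R f) m = 0"
  using rreg_app_mem[OF lin_rel_radj closed_radj assms] by blast+

lemma R_eqI: "(f, k) \<in> radj J \<Longrightarrow> \<forall>m\<in>rmul (radj J). cinner k m = 0 \<Longrightarrow> R f = k"
  by (rule rreg_app_eqI[OF lin_rel_radj closed_radj])

lemma R_diff: "u \<in> rdom (radj J) \<Longrightarrow> v \<in> rdom (radj J) \<Longrightarrow> R (u - v) = R u - R v"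
  by (rule rreg_app_diff[OF lin_rel_radj closed_radj])

lemma dominated_functional_on_S:
  assumes "\<And>p q. p \<in> S \<Longrightarrow> q \<in> S \<Longrightarrow> L (p + q) = L p + L q"
    and "\<And>a p. p \<in> S \<Longrightarrow> L (a *\<^sub>C p) = a * L p"
    and "\<And>p. p \<in> S \<Longrightarrow> cmod (L p) \<le> C * norm (Q (fst p))"
  shows "dominated_functional S (\<lambda>p. Q (fst p)) L C"
proof
  show "csubspace S" using lin_rel_S by (simp add: lin_rel_iff_csubspace)
  show "clinear_on S (\<lambda>p. Q (fst p))"
    unfolding clinear_on_def
  proof (intro conjI ballI allI)
    fix p q assume "p \<in> S" "q \<in> S"
    then show "Q (fst (p + q)) = Q (fst p) + Q (fst q)"
      using clinear_on_add[OF Q_clinear_on] by (simp add: rdom_def)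
  next
    fix a p assume "p \<in> S"
    then show "Q (fst (a *\<^sub>C p)) = a *\<^sub>C Q (fst p)"
      using clinear_on_scaleC[OF Q_clinear_on] by (simp add: rdom_def scaleC_prod_def)
  qed
  show "clinear_on S L" using assms(1,2) by (simp add: clinear_on_def)
qed (use assms(3) in blast)

lemma companion_functional_bound:
  assumes f: "(f, f') \<in> H" and \<phi>: "(\<phi>, \<phi>') \<in> S"
  shows "cmod (cinner (\<phi>' - c *\<^sub>R \<phi>) f) \<le> sqrt (Re (cinner (f' - c *\<^sub>R f) f)) * norm (Q \<phi>)"
proof -
  define C where "C = sqrt (Re (cinner (f' - c *\<^sub>R f) f))"
  have \<phi>H: "(\<phi>, \<phi>') \<in> H" using \<phi> S_subset_H by blast
  have "(cmod (cinner (f' - c *\<^sub>R f) \<phi>))\<^sup>2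
      \<le> Re (cinner (f' - c *\<^sub>R f) f) * Re (cinner (\<phi>' - c *\<^sub>R \<phi>) \<phi>)"
    by (rule H_shifted_Cauchy_Schwarz[OF f \<phi>H])
  also have "Re (cinner (\<phi>' - c *\<^sub>R \<phi>) \<phi>) = (norm (Q \<phi>))\<^sup>2"
    using S_shifted_form[OF \<phi>] by (simp only: cinner_self Re_complex_of_real)
  also have "Re (cinner (f' - c *\<^sub>R f) f) = C\<^sup>2"
    unfolding C_def using H_shifted_nonneg(2)[OF f] by simp
  finally have "(cmod (cinner (f' - c *\<^sub>R f) \<phi>))\<^sup>2 \<le> (C * norm (Q \<phi>))\<^sup>2"
    by (simp only: power_mult_distrib mult.commute)
  then have "cmod (cinner (f' - c *\<^sub>R f) \<phi>) \<le> C * norm (Q \<phi>)"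
    by (rule power2_le_imp_le) (use H_shifted_nonneg(2)[OF f] in \<open>simp add: C_def\<close>)
  then show ?thesis unfolding C_def using H_shifted_hermitian[OF f \<phi>H] by simp
qed

lemma rdom_H_subset_rdom_radj:
  assumes f: "(f, f') \<in> H"
  shows "f \<in> rdom (radj J)"
proof -
  have "dominated_functional S (\<lambda>p. Q (fst p)) (\<lambda>p. cinner (snd p - c *\<^sub>R fst p) f)
      (sqrt (Re (cinner (f' - c *\<^sub>R f) f)))"
  proof (rule dominated_functional_on_S)
    fix p q :: "'a \<times> 'a"
    have "snd (p + q) - c *\<^sub>R fst (p + q) = (snd p - c *\<^sub>R fst p) + (snd q - c *\<^sub>R fst q)"
      by (simp add: scaleR_add_right)
    then show "cinner (snd (p + q) - c *\<^sub>R fst (p + q)) f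
        = cinner (snd p - c *\<^sub>R fst p) f + cinner (snd q - c *\<^sub>R fst q) f"
      by (simp only: cinner_add_left)
    fix a
    have "snd (a *\<^sub>C p) - c *\<^sub>R fst (a *\<^sub>C p) = a *\<^sub>C (snd p - c *\<^sub>R fst p)"
      by (simp add: scaleC_prod_def scaleC_diff_right scaleR_scaleC_commute)
    then show "cinner (snd (a *\<^sub>C p) - c *\<^sub>R fst (a *\<^sub>C p)) f = a * cinner (snd p - c *\<^sub>R fst p) f"
      by (simp only: cinner_scaleC_left)
  next
    fix p assume "p \<in> S"
    then show "cmod (cinner (snd p - c *\<^sub>R fst p) f)
        \<le> sqrt (Re (cinner (f' - c *\<^sub>R f) f)) * norm (Q (fst p))"
      using companion_functional_bound[OF f, of "fst p" "snd p"] by simp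
  qed
  then obtain k where "\<forall>p\<in>S. cinner (snd p - c *\<^sub>R fst p) f = cinner (Q (fst p)) k"
    by (blast dest: dominated_functional.representation)
  then have "(f, k) \<in> radj J" unfolding mem_radj_companion by (metis fst_conv snd_conv)
  then show ?thesis by (rule rdomI)
qed

lemma R_in_closure:
  assumes f: "f \<in> rdom (radj J)"
  shows "R f \<in> closure (Q ` rdom S)"
proof -
  have "dominated_functional S (\<lambda>p. Q (fst p)) (\<lambda>p. cinner (Q (fst p)) (R f)) (norm (R f))"
  proof (rule dominated_functional_on_S)
    fix p q assume "p \<in> S" "q \<in> S"
    then show "cinner (Q (fst (p + q))) (R f) = cinner (Q (fst p)) (R f) + cinner (Q (fst q)) (R f)"
      using clinear_on_add[OF Q_clinear_on] by (simp add: rdom_def cinner_add_left)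
  next
    fix a p assume "p \<in> S"
    then show "cinner (Q (fst (a *\<^sub>C p))) (R f) = a * cinner (Q (fst p)) (R f)"
      using clinear_on_scaleC[OF Q_clinear_on] by (simp add: rdom_def scaleC_prod_def cinner_scaleC_left)
  next
    fix p :: "'a \<times> 'a"
    show "cmod (cinner (Q (fst p)) (R f)) \<le> norm (R f) * norm (Q (fst p))"
      using cinner_Cauchy_Schwarz[of "Q (fst p)" "R f"] by (simp add: mult.commute)
  qed
  then obtain k where k: "k \<in> closure ((\<lambda>p. Q (fst p)) ` S)"
    and rep: "\<forall>p\<in>S. cinner (Q (fst p)) (R f) = cinner (Q (fst p)) k"
    by (blast dest: dominated_functional.representation)
  have image: "(\<lambda>p. Q (fst p)) ` S = Q ` rdom S" unfolding rdom_def by auto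
  have "R f - k \<in> rmul (radj J)"
    unfolding mem_rmul_radj_companion
  proof (intro allI impI)
    fix \<phi> \<phi>' assume "(\<phi>, \<phi>') \<in> S"
    then show "cinner (Q \<phi>) (R f - k) = 0" using rep by (force simp: cinner_diff_right)
  qed
  moreover have "cinner k m = 0" if m: "m \<in> rmul (radj J)" for m
  proof (rule orthogonal_closure[OF _ k])
    fix y assume "y \<in> (\<lambda>p. Q (fst p)) ` S"
    then obtain \<phi> \<phi>' where "(\<phi>, \<phi>') \<in> S" and "y = Q \<phi>" by auto
    then show "cinner y m = 0" using m unfolding mem_rmul_radj_companion by blast
  qed
  ultimately have "R f = k" using R_mem(2)[OF f] by (blast intro: eq_if_diff_orthogonal)
  then show ?thesis using k unfolding image by simp
qed

lemma shifted_form_diff_identity: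
  assumes h: "(h, h') \<in> S" and f: "(f, f') \<in> H" and fd: "f \<in> rdom (radj J)"
  shows "tform H (f - h) (f - h) - complex_of_real (c * (norm (f - h))\<^sup>2)
          - complex_of_real ((norm (R f - Q h))\<^sup>2)
        = tform H f f - complex_of_real (c * (norm f)\<^sup>2) - complex_of_real ((norm (R f))\<^sup>2)"
proof -
  have hH: "(h, h') \<in> H" using h S_subset_H by blast
  have "cinner (h' - c *\<^sub>R h) f = cinner (Q h) (R f)"
    using R_mem(1)[OF fd] h unfolding mem_radj_companion by blast
  then have Rf: "cinner (Q h) (R f) = cinner h' f - complex_of_real c * cinner h f"
    by (simp add: cinner_diff_left cinner_scaleR_left)
  have hh: "cinner h' h = complex_of_real c * cinner h h + cinner (Q h) (Q h)"
    using S_shifted_form[OF h] by (simp add: cinner_diff_left cinner_scaleR_left diff_eq_eq)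
  have "cinner f' h = cnj (cinner h' f)"
    using H_symmetric[OF hH f] cinner_commute[of f' h] by simp
  moreover have "cinner f h = cnj (cinner h f)" and "cinner (R f) (Q h) = cnj (cinner (Q h) (R f))"
    by (simp_all add: cinner_commute[symmetric])
  ultimately show ?thesis
    unfolding tform_H[OF lin_rel_diff[OF lin_rel_H f hH]] tform_H[OF f] of_real_mult cinner_self[symmetric]
    unfolding cinner_diff_left cinner_diff_right Rf hh
    by (simp add: algebra_simps)
qed

text \<open>Approximate \<open>R f\<close> by \<open>Q h\<close> in \<open>shifted_form_diff_identity\<close>.\<close>
lemma shifted_form_ge_norm_R:
  assumes f: "(f, f') \<in> H"
  shows "0 \<le> tform H f f - complex_of_real (c * (norm f)\<^sup>2) - complex_of_real ((norm (R f))\<^sup>2)"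
    (is "0 \<le> ?D")
proof -
  have fd: "f \<in> rdom (radj J)" by (rule rdom_H_subset_rdom_radj[OF f])
  have Im: "Im ?D = 0"
    using H_shifted_nonneg(1)[OF f] arg_cong[OF tform_H_shifted[OF f], of Im] by simp
  have approx: "0 \<le> Re ?D + e" if "0 < e" for e
  proof -
    have "\<forall>\<epsilon>>0. \<exists>h\<in>rdom S. dist (Q h) (R f) < \<epsilon>"
      using R_in_closure[OF fd] unfolding closure_approachable by simp
    then obtain h where hS: "h \<in> rdom S" and close: "dist (Q h) (R f) < sqrt e"
      using \<open>0 < e\<close> real_sqrt_gt_zero by blast
    obtain h' where h: "(h, h') \<in> S" using hS by (rule rdomE)
    have fh: "(f - h, f' - h') \<in> H" using lin_rel_diff[OF lin_rel_H f] h S_subset_H by blast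
    have "0 \<le> Re (tform H (f - h) (f - h) - complex_of_real (c * (norm (f - h))\<^sup>2))"
      using H_shifted_nonneg(2)[OF fh] by (simp only: tform_H_shifted[OF fh])
    moreover have "(norm (R f - Q h))\<^sup>2 < (sqrt e)\<^sup>2"
      using close unfolding dist_norm norm_minus_commute[of "Q h"] by (simp add: power_strict_mono)
    then have "(norm (R f - Q h))\<^sup>2 < e" using \<open>0 < e\<close> by simp
    ultimately show ?thesis
      using arg_cong[OF shifted_form_diff_identity[OF h f fd], of Re] by simp
  qed
  have "0 \<le> Re ?D" by (rule field_le_epsilon[OF approx])
  then show ?thesis using Im by (simp add: less_eq_complex_def)
qed

lemma norm_R_diff_le_shifted_form:
  assumes f: "(f, f') \<in> H" and h: "(h, h') \<in> S"
  shows "complex_of_real ((norm (R f - Q h))\<^sup>2)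
    \<le> tform H (f - h) (f - h) - complex_of_real (c * (norm (f - h))\<^sup>2)"
proof -
  have "0 \<le> tform H (f - h) (f - h) - complex_of_real (c * (norm (f - h))\<^sup>2)
      - complex_of_real ((norm (R f - Q h))\<^sup>2)"
    unfolding shifted_form_diff_identity[OF h f rdom_H_subset_rdom_radj[OF f]]
    by (rule shifted_form_ge_norm_R[OF f])
  then show ?thesis by (simp only: diff_ge_0_iff_ge)
qed

subsection \<open>The Krein type extension\<close>

abbreviation K :: "('a \<times> 'a) set" where
  "K \<equiv> krein_ext S c Q"

lemma mem_krein_ext:
  "(u, w') \<in> K \<longleftrightarrow> (\<exists>k w. (u, k) \<in> radj J \<and> (k, w) \<in> radj (radj J) \<and> w' = w + c *\<^sub>R u)"
  unfolding krein_ext_def rshift_def rprod_def by blast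

lemma rdom_krein_ext:
  assumes "u \<in> rdom K"
  shows "u \<in> rdom (radj J)"
proof -
  obtain w' where "(u, w') \<in> K" using assms by (rule rdomE)
  then obtain k where "(u, k) \<in> radj J" unfolding mem_krein_ext by blast
  then show ?thesis by (rule rdomI)
qed

lemma rdom_krein_ext_diff:
  assumes "u \<in> rdom K" and "v \<in> rdom K"
  shows "u - v \<in> rdom K"
proof -
  obtain u' v' where "(u, u') \<in> K" and "(v, v') \<in> K" using assms by (meson rdomE)
  then obtain k\<^sub>1 w\<^sub>1 k\<^sub>2 w\<^sub>2 where u: "(u, k\<^sub>1) \<in> radj J" "(k\<^sub>1, w\<^sub>1) \<in> radj (radj J)"
    and v: "(v, k\<^sub>2) \<in> radj J" "(k\<^sub>2, w\<^sub>2) \<in> radj (radj J)"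
    unfolding mem_krein_ext by blast
  have "(u - v, k\<^sub>1 - k\<^sub>2) \<in> radj J" "(k\<^sub>1 - k\<^sub>2, w\<^sub>1 - w\<^sub>2) \<in> radj (radj J)"
    using lin_rel_diff[OF lin_rel_radj u(1) v(1)] lin_rel_diff[OF lin_rel_radj u(2) v(2)] .
  then have "(u - v, (w\<^sub>1 - w\<^sub>2) + c *\<^sub>R (u - v)) \<in> K" unfolding mem_krein_ext by blast
  then show ?thesis by (rule rdomI)
qed

text \<open>For \<open>(u, k) \<in> J*\<close> and \<open>(k, w) \<in> J**\<close>, \<open>(w, v) = (k, R v)\<close>, and \<open>k - R u \<in> mul J*\<close> is
orthogonal to \<open>R v\<close>.\<close>
lemma tform_krein_ext:
  assumes u: "u \<in> rdom K" and v: "v \<in> rdom K"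
  shows "tform K u v = complex_of_real c * cinner u v + cinner (R u) (R v)"
proof -
  define w' where "w' = (SOME z. (u, z) \<in> K)"
  obtain z where "(u, z) \<in> K" using u by (rule rdomE)
  then have "(u, w') \<in> K" unfolding w'_def by (rule someI)
  then obtain k w where k: "(u, k) \<in> radj J" and kw: "(k, w) \<in> radj (radj J)" and w': "w' = w + c *\<^sub>R u"
    unfolding mem_krein_ext by blast
  have ud: "u \<in> rdom (radj J)" and vd: "v \<in> rdom (radj J)" using u v by (simp_all add: rdom_krein_ext)
  have "cinner (R v) k = cinner v w" using kw R_mem(1)[OF vd] unfolding mem_radj_iff by blast
  then have "cinner w v = cinner k (R v)" using cinner_commute[of w v] cinner_commute[of k "R v"] by simp
  moreover have "(u - u, k - R u) \<in> radj J" using lin_rel_diff[OF lin_rel_radj k R_mem(1)[OF ud]] .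
  then have "cinner (R v) (k - R u) = 0" using R_mem(2)[OF vd] unfolding rmul_def by simp
  then have "cinner (k - R u) (R v) = 0" using cinner_commute[of "k - R u" "R v"] by simp
  then have "cinner k (R v) = cinner (R u) (R v)" by (simp add: cinner_diff_left)
  ultimately show ?thesis
    unfolding tform_def w'_def[symmetric] w' by (simp add: cinner_add_left cinner_scaleR_left)
qed

lemma krein_form_conv_Cauchy:
  assumes fc: "form_conv (rel_form K) f s"
  shows "Cauchy (\<lambda>n. R (s n))"
proof (rule CauchyI)
  have sK: "\<And>n. s n \<in> rdom K" using fc unfolding form_conv_rel_form_iff by blast
  have key: "(norm (R (s n) - R (s m)))\<^sup>2
      \<le> norm (tform K (s n - s m) (s n - s m)) + \<bar>c\<bar> * (norm (s n - s m))\<^sup>2" for n m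
  proof -
    define d where "d = s n - s m"
    have dK: "d \<in> rdom K" unfolding d_def by (rule rdom_krein_ext_diff[OF sK sK])
    have "R d = R (s n) - R (s m)" unfolding d_def by (rule R_diff[OF rdom_krein_ext[OF sK] rdom_krein_ext[OF sK]])
    then have "Re (tform K d d) = c * (norm d)\<^sup>2 + (norm (R (s n) - R (s m)))\<^sup>2"
      using tform_krein_ext[OF dK dK] by (simp add: cinner_self)
    moreover have "Re (tform K d d) \<le> norm (tform K d d)" by (rule complex_Re_le_cmod)
    moreover have "- c * (norm d)\<^sup>2 \<le> \<bar>c\<bar> * (norm d)\<^sup>2" by (intro mult_right_mono) auto
    ultimately show ?thesis unfolding d_def by linarith
  qed
  fix e :: real assume "0 < e"
  then obtain N where N: "\<forall>n\<ge>N. \<forall>m\<ge>N. norm (tform K (s n - s m) (s n - s m)) + \<bar>c\<bar> * (norm (s n - s m))\<^sup>2 < e\<^sup>2"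
    using form_conv_shifted_vanishing[OF fc, where c = c] by (meson zero_less_power)
  show "\<exists>M. \<forall>m\<ge>M. \<forall>n\<ge>M. norm (R (s m) - R (s n)) < e"
  proof (intro exI allI impI)
    fix m n assume "N \<le> m" "N \<le> n"
    then have "(norm (R (s m) - R (s n)))\<^sup>2 < e\<^sup>2" using key[of m n] N by fastforce
    then show "norm (R (s m) - R (s n)) < e" using \<open>0 < e\<close> by (simp add: power_less_imp_less_base)
  qed
qed

lemma krein_form_conv_R:
  assumes fc: "form_conv (rel_form K) f s"
  shows "f \<in> rdom (radj J)" and "(\<lambda>n. R (s n)) \<longlonglongrightarrow> R f"
proof -
  have sJ: "\<And>n. s n \<in> rdom (radj J)" and s_lim: "s \<longlonglongrightarrow> f"
    using fc rdom_krein_ext unfolding form_conv_rel_form_iff by blast+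
  obtain r where r: "(\<lambda>n. R (s n)) \<longlonglongrightarrow> r"
    using krein_form_conv_Cauchy[OF fc] Cauchy_convergent_iff convergent_def by blast
  have "(f, r) \<in> radj J"
    using closed_sequentially[OF closed_radj _ tendsto_Pair[OF s_lim r]] R_mem(1)[OF sJ] by simp
  moreover have "cinner r m = 0" if m: "m \<in> rmul (radj J)" for m
  proof (rule orthogonal_closure)
    show "r \<in> closure (range (\<lambda>n. R (s n)))"
      unfolding closure_sequential using r by (intro exI[of _ "\<lambda>n. R (s n)"]) auto
  qed (use R_mem(2)[OF sJ] m in auto)
  ultimately have "R f = r" by (blast intro: R_eqI)
  then show "f \<in> rdom (radj J)" and "(\<lambda>n. R (s n)) \<longlonglongrightarrow> R f"
    using \<open>(f, r) \<in> radj J\<close> r by (auto intro: rdomI)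
qed

lemma closed_form_krein_ext:
  assumes "f \<in> fst (closed_form K)"
  shows "snd (closed_form K) f f = complex_of_real c * cinner f f + cinner (R f) (R f)"
proof -
  obtain s\<^sub>0 where "form_conv (rel_form K) f s\<^sub>0"
    using assms unfolding closed_form_def form_closure_def by auto
  then show ?thesis
    unfolding closed_form_def
  proof (rule form_closure_eqI)
    fix s s' assume s: "form_conv (rel_form K) f s" and s': "form_conv (rel_form K) f s'"
    have "s \<longlonglongrightarrow> f" "s' \<longlonglongrightarrow> f" using s s' unfolding form_conv_rel_form_iff by blast+
    then have "(\<lambda>n. complex_of_real c * cinner (s n) (s' n) + cinner (R (s n)) (R (s' n)))
        \<longlonglongrightarrow> complex_of_real c * cinner f f + cinner (R f) (R f)"
      using krein_form_conv_R(2)[OF s] krein_form_conv_R(2)[OF s'] by (intro tendsto_intros)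
    moreover have "snd (rel_form K) (s n) (s' n)
        = complex_of_real c * cinner (s n) (s' n) + cinner (R (s n)) (R (s' n))" for n
    proof -
      have "s n \<in> rdom K" "s' n \<in> rdom K" using s s' unfolding form_conv_rel_form_iff by blast+
      then show ?thesis unfolding rel_form_def snd_conv by (rule tform_krein_ext)
    qed
    ultimately show "(\<lambda>n. snd (rel_form K) (s n) (s' n))
        \<longlonglongrightarrow> complex_of_real c * cinner f f + cinner (R f) (R f)" by simp
  qed
qed

subsection \<open>The closed form of \<open>H\<close>\<close>

text \<open>Split \<open>(t(H) - c)[u] = (t(H) - c)[u, u - v m] + (t(H) - c)[u, v m]\<close>, bound the first term by
Cauchy-Schwarz and let \<open>m \<rightarrow> \<infinity>\<close> in the second.\<close>
lemma shifted_form_le_if_tail_le: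
  assumes u: "(u, u') \<in> H" and v: "\<And>m. (v m, v' m) \<in> H" and v_lim: "v \<longlonglongrightarrow> 0"
    and \<epsilon>: "0 < \<epsilon>"
    and tail: "\<And>m. m \<ge> N \<Longrightarrow> Re (cinner ((u' - v' m) - c *\<^sub>R (u - v m)) (u - v m)) \<le> \<epsilon>\<^sup>2"
  shows "Re (cinner (u' - c *\<^sub>R u) u) \<le> \<epsilon>\<^sup>2"
proof (rule le_square_if_le_sqrt_mult[OF H_shifted_nonneg(2)[OF u] \<epsilon>])
  let ?q = "Re (cinner (u' - c *\<^sub>R u) u)"
  have le: "?q - sqrt ?q * \<epsilon> \<le> cmod (cinner (u' - c *\<^sub>R u) (v m))" if m: "N \<le> m" for m
  proof -
    have uv: "(u - v m, u' - v' m) \<in> H" by (rule lin_rel_diff[OF lin_rel_H u v])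
    have "(cmod (cinner (u' - c *\<^sub>R u) (u - v m)))\<^sup>2
        \<le> ?q * Re (cinner ((u' - v' m) - c *\<^sub>R (u - v m)) (u - v m))"
      by (rule H_shifted_Cauchy_Schwarz[OF u uv])
    also have "\<dots> \<le> ?q * \<epsilon>\<^sup>2" using tail[OF m] H_shifted_nonneg(2)[OF u] by (rule mult_left_mono)
    also have "\<dots> = (sqrt ?q * \<epsilon>)\<^sup>2" using H_shifted_nonneg(2)[OF u] by (simp add: power_mult_distrib)
    finally have "cmod (cinner (u' - c *\<^sub>R u) (u - v m)) \<le> sqrt ?q * \<epsilon>"
      by (rule power2_le_imp_le) (use \<epsilon> H_shifted_nonneg(2)[OF u] in simp)
    moreover have "?q = Re (cinner (u' - c *\<^sub>R u) (u - v m) + cinner (u' - c *\<^sub>R u) (v m))"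
      by (simp add: cinner_diff_right)
    then have "?q \<le> cmod (cinner (u' - c *\<^sub>R u) (u - v m)) + cmod (cinner (u' - c *\<^sub>R u) (v m))"
      using complex_Re_le_cmod[of "cinner (u' - c *\<^sub>R u) (u - v m) + cinner (u' - c *\<^sub>R u) (v m)"]
        norm_triangle_ineq[of "cinner (u' - c *\<^sub>R u) (u - v m)" "cinner (u' - c *\<^sub>R u) (v m)"]
      by linarith
    ultimately show ?thesis by linarith
  qed
  have "(\<lambda>m. cmod (cinner (u' - c *\<^sub>R u) (v m))) \<longlonglongrightarrow> cmod (cinner (u' - c *\<^sub>R u) 0)"
    by (intro tendsto_intros v_lim)
  then have "(\<lambda>m. cmod (cinner (u' - c *\<^sub>R u) (v m))) \<longlonglongrightarrow> 0" by simp
  then have "?q - sqrt ?q * \<epsilon> \<le> 0" by (rule LIMSEQ_le_const) (use le in blast)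
  then show "?q \<le> sqrt ?q * \<epsilon>" by simp
qed

lemma shifted_form_tendsto_zero:
  assumes f: "(f, f') \<in> H" and fc: "form_conv (rel_form H) f s" and s': "\<And>n. (s n, s' n) \<in> H"
  shows "(\<lambda>n. Re (cinner ((s' n - f') - c *\<^sub>R (s n - f)) (s n - f))) \<longlonglongrightarrow> 0"
proof (rule LIMSEQ_I)
  fix r :: real assume "0 < r"
  define \<epsilon> where "\<epsilon> = sqrt (r / 2)"
  have \<epsilon>: "0 < \<epsilon>" "\<epsilon>\<^sup>2 < r" unfolding \<epsilon>_def using \<open>0 < r\<close> by simp_all
  obtain N where N: "\<forall>n\<ge>N. \<forall>m\<ge>N. norm (tform H (s n - s m) (s n - s m)) + \<bar>c\<bar> * (norm (s n - s m))\<^sup>2 < \<epsilon>\<^sup>2"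
    using form_conv_shifted_vanishing[OF fc, where c = c] \<epsilon>(1) by (meson zero_less_power)
  have tail: "Re (cinner ((s' n - s' m) - c *\<^sub>R (s n - s m)) (s n - s m)) \<le> \<epsilon>\<^sup>2"
    if "N \<le> n" "N \<le> m" for n m
  proof -
    have d: "(s n - s m, s' n - s' m) \<in> H" by (rule lin_rel_diff[OF lin_rel_H s' s'])
    have "Re (cinner ((s' n - s' m) - c *\<^sub>R (s n - s m)) (s n - s m))
        = Re (tform H (s n - s m) (s n - s m)) - c * (norm (s n - s m))\<^sup>2"
      using arg_cong[OF tform_H_shifted[OF d], of Re] by simp
    also have "\<dots> \<le> norm (tform H (s n - s m) (s n - s m)) + \<bar>c\<bar> * (norm (s n - s m))\<^sup>2"
    proof -
      have "- c * (norm (s n - s m))\<^sup>2 \<le> \<bar>c\<bar> * (norm (s n - s m))\<^sup>2" by (intro mult_right_mono) auto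
      then show ?thesis using complex_Re_le_cmod[of "tform H (s n - s m) (s n - s m)"] by simp
    qed
    finally show ?thesis using N that by fastforce
  qed
  have s_lim: "(\<lambda>m. s m - f) \<longlonglongrightarrow> 0"
    using fc tendsto_diff[of s f sequentially "\<lambda>m. f" f] unfolding form_conv_rel_form_iff by simp
  have "Re (cinner ((s' n - f') - c *\<^sub>R (s n - f)) (s n - f)) \<le> \<epsilon>\<^sup>2" if n: "N \<le> n" for n
  proof (rule shifted_form_le_if_tail_le[where v = "\<lambda>m. s m - f" and v' = "\<lambda>m. s' m - f'" and N = N])
    show "(s n - f, s' n - f') \<in> H" "\<And>m. (s m - f, s' m - f') \<in> H"
      using lin_rel_diff[OF lin_rel_H s' f] by blast+
    show "(\<lambda>m. s m - f) \<longlonglongrightarrow> 0" "0 < \<epsilon>" by (fact s_lim, fact \<epsilon>(1))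
    fix m assume "N \<le> m"
    then show "Re (cinner ((s' n - f' - (s' m - f')) - c *\<^sub>R (s n - f - (s m - f))) (s n - f - (s m - f)))
        \<le> \<epsilon>\<^sup>2" using tail[OF n] by simp
  qed
  then show "\<exists>N. \<forall>n\<ge>N. norm (Re (cinner ((s' n - f') - c *\<^sub>R (s n - f)) (s n - f)) - 0) < r"
    using H_shifted_nonneg(2)[OF lin_rel_diff[OF lin_rel_H s' f]] \<epsilon>(2) by (intro exI[of _ N]) force
qed

lemma shifted_form_cross_tendsto_zero:
  assumes u: "\<And>n. (u n, u' n) \<in> H" and v: "\<And>n. (v n, v' n) \<in> H"
    and "(\<lambda>n. Re (cinner (u' n - c *\<^sub>R u n) (u n))) \<longlonglongrightarrow> 0"
    and "(\<lambda>n. Re (cinner (v' n - c *\<^sub>R v n) (v n))) \<longlonglongrightarrow> 0"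
  shows "(\<lambda>n. cinner (u' n - c *\<^sub>R u n) (v n)) \<longlonglongrightarrow> 0"
proof (rule Lim_null_comparison)
  show "\<forall>\<^sub>F n in sequentially. norm (cinner (u' n - c *\<^sub>R u n) (v n))
      \<le> sqrt (Re (cinner (u' n - c *\<^sub>R u n) (u n)) * Re (cinner (v' n - c *\<^sub>R v n) (v n)))"
    using H_shifted_Cauchy_Schwarz[OF u v] by (intro always_eventually allI real_le_rsqrt) simp
  show "(\<lambda>n. sqrt (Re (cinner (u' n - c *\<^sub>R u n) (u n)) * Re (cinner (v' n - c *\<^sub>R v n) (v n))))
      \<longlonglongrightarrow> 0"
    using tendsto_real_sqrt[OF tendsto_mult[OF assms(3,4)]] by simp
qed

lemma form_conv_graph:
  assumes "form_conv (rel_form H) f s"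
  obtains s' where "\<And>n. (s n, s' n) \<in> H"
proof -
  have "\<forall>n. \<exists>y. (s n, y) \<in> H" using assms unfolding form_conv_rel_form_iff by (blast elim: rdomE)
  then show thesis using that by metis
qed

lemma tform_H_tendsto:
  assumes f: "(f, f') \<in> H" and s: "form_conv (rel_form H) f s" and t: "form_conv (rel_form H) f t"
  shows "(\<lambda>n. tform H (s n) (t n)) \<longlonglongrightarrow> tform H f f"
proof -
  obtain s' t' where s': "\<And>n. (s n, s' n) \<in> H" and t': "\<And>n. (t n, t' n) \<in> H"
    using form_conv_graph[OF s] form_conv_graph[OF t] by metis
  define u u' v v' where "u n = s n - f" and "u' n = s' n - f'" and "v n = t n - f" and "v' n = t' n - f'"
    for n
  have uH: "(u n, u' n) \<in> H" and vH: "(v n, v' n) \<in> H" for n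
    unfolding u_def u'_def v_def v'_def using lin_rel_diff[OF lin_rel_H s' f] lin_rel_diff[OF lin_rel_H t' f]
    by blast+
  have u_lim: "u \<longlonglongrightarrow> 0" and v_lim: "v \<longlonglongrightarrow> 0"
    using s t tendsto_diff[of s f sequentially "\<lambda>n. f" f] tendsto_diff[of t f sequentially "\<lambda>n. f" f]
    unfolding u_def[abs_def] v_def[abs_def] form_conv_rel_form_iff by simp_all
  have expand: "tform H (s n) (t n) = cinner f' f + cinner f' (v n) + cinner (u n) f'
      + (cinner (u' n - c *\<^sub>R u n) (v n) + complex_of_real c * cinner (u n) (v n))" for n
  proof -
    have "t n \<in> rdom H" by (rule rdomI[OF t'])
    then have "tform H (s n) (t n) = cinner (f' + u' n) (f + v n)"
      unfolding u'_def v_def using tform_eq_cinner[OF subset_refl s'] by simp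
    also have "\<dots> = cinner f' f + cinner f' (v n) + cinner (u' n) f + cinner (u' n) (v n)"
      by (simp add: cinner_add_left cinner_add_right)
    also have "cinner (u' n) f = cinner (u n) f'" by (rule H_symmetric[OF uH f])
    finally show ?thesis by (simp add: cinner_diff_left cinner_scaleR_left)
  qed
  have "(\<lambda>n. Re (cinner (u' n - c *\<^sub>R u n) (u n))) \<longlonglongrightarrow> 0"
    and "(\<lambda>n. Re (cinner (v' n - c *\<^sub>R v n) (v n))) \<longlonglongrightarrow> 0"
    unfolding u_def u'_def v_def v'_def
    by (intro shifted_form_tendsto_zero[OF f s s'] shifted_form_tendsto_zero[OF f t t'])+
  then have "(\<lambda>n. cinner (u' n - c *\<^sub>R u n) (v n)) \<longlonglongrightarrow> 0"
    by (rule shifted_form_cross_tendsto_zero[OF uH vH])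
  then have "(\<lambda>n. tform H (s n) (t n))
      \<longlonglongrightarrow> cinner f' f + cinner f' 0 + cinner 0 f' + (0 + complex_of_real c * cinner (0::'a) 0)"
    unfolding expand by (intro tendsto_intros u_lim v_lim)
  then show ?thesis by (simp add: tform_H[OF f])
qed

lemma closed_form_H:
  assumes f: "(f, f') \<in> H"
  shows "f \<in> fst (closed_form H)" and "snd (closed_form H) f f = tform H f f"
proof -
  have const: "form_conv (rel_form H) f (\<lambda>n. f)" using f by (intro form_conv_const rdomI)
  then show "f \<in> fst (closed_form H)" unfolding closed_form_def form_closure_def by auto
  show "snd (closed_form H) f f = tform H f f"
    unfolding closed_form_def
    by (rule form_closure_eqI[OF const]) (use tform_H_tendsto[OF f] in \<open>simp add: rel_form_def\<close>)
qed

text \<open>If \<open>t\<^sub>H \<subseteq> t\<^sub>K\<close>, then \<open>(t(H) - c)[f] = \<parallel>R f\<parallel>\<^sup>2\<close>, so the right-hand side of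
\<open>shifted_form_diff_identity\<close> vanishes.\<close>
lemma shifted_form_eq_if_form_ext:
  assumes ext: "form_ext (closed_form H) (closed_form K)" and f: "(f, f') \<in> H" and h: "(h, h') \<in> S"
  shows "tform H (f - h) (f - h) - complex_of_real (c * (norm (f - h))\<^sup>2)
    = complex_of_real ((norm (R f - Q h))\<^sup>2)"
proof -
  have "f \<in> fst (closed_form K)" and "snd (closed_form H) f f = snd (closed_form K) f f"
    using ext closed_form_H(1)[OF f] unfolding form_ext_def by auto
  then have "tform H f f = complex_of_real c * cinner f f + cinner (R f) (R f)"
    using closed_form_H(2)[OF f] closed_form_krein_ext by simp
  then have "tform H f f - complex_of_real (c * (norm f)\<^sup>2) - complex_of_real ((norm (R f))\<^sup>2) = 0"
    by (simp add: cinner_self)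
  then show ?thesis
    using shifted_form_diff_identity[OF h f rdom_H_subset_rdom_radj[OF f]] by simp
qed

end

theorem lemma7p3:
  fixes S H :: "('a::chilbert_space \<times> 'a) set"
    and Q :: "'a \<Rightarrow> 'k::chilbert_space"
    and \<gamma> c :: real
  assumes S_sb: "semibounded S"
    and S_lb: "is_lower_bound S \<gamma>"
    and c_le: "c \<le> \<gamma>"
    and Q_rep: "representing_map S c Q"
    and H_sa: "selfadjoint H"
    and H_sb: "semibounded H"
    and S_sub_H: "S \<subseteq> H"
    and H_bb: "bounded_below H c"
  shows
    "(\<forall>(h, h')\<in>S. \<forall>(f, f')\<in>H. f \<in> rdom (radj (companion S c Q)) \<longrightarrow>
        tform H (f - h) (f - h) - complex_of_real (c * (norm (f - h))\<^sup>2)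
          - complex_of_real ((norm (rapp (rreg (radj (companion S c Q))) f - Q h))\<^sup>2)
        = tform H f f - complex_of_real (c * (norm f)\<^sup>2)
          - complex_of_real ((norm (rapp (rreg (radj (companion S c Q))) f))\<^sup>2))
   \<and> (\<forall>(f, f')\<in>H. \<forall>(h, h')\<in>S. f \<in> rdom (radj (companion S c Q)) \<and>
        tform H (f - h) (f - h) - complex_of_real (c * (norm (f - h))\<^sup>2)
          \<ge> complex_of_real ((norm (rapp (rreg (radj (companion S c Q))) f - Q h))\<^sup>2))
   \<and> (form_ext (closed_form H) (closed_form (krein_ext S c Q)) \<longrightarrow>
      (\<forall>(f, f')\<in>H. \<forall>(h, h')\<in>S.
        tform H (f - h) (f - h) - complex_of_real (c * (norm (f - h))\<^sup>2)
          = complex_of_real ((norm (rapp (rreg (radj (companion S c Q))) f - Q h))\<^sup>2)))"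
proof -
  interpret semibounded_extension S H Q c
    using S_sb H_sb Q_rep H_sa S_sub_H H_bb by unfold_locales (simp_all add: semibounded_def)
  show ?thesis
    using shifted_form_diff_identity rdom_H_subset_rdom_radj norm_R_diff_le_shifted_form
      shifted_form_eq_if_form_ext
    by fast
qed

end
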